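(* Let $V$ be a simple Yetter-Drinfeld module over $H=B(n,w,\gamma)$ with $\dim_\Bbbk V=p+1$ for some $p\ge0$, and let $v\in V$ be a standard element of type $(\alpha,\beta,x^rg^i)$ with $\alpha,\beta\in\Bbbk^*$, $r,i\in\mathbb{Z}$. (1) If $\beta^n\ne1$, then $p=n-1$; moreover $c_\beta^{r,i}(k,0)\ne0$ for all $0\le k\le n$ and $c_\beta^{r,i}(n,l)=0$ for all $1\le l\le n-1$. (2) If $\beta^n=1$, write $\beta=\gamma^j$ with $j\in\mathbb{Z}$. Then $p=n-\phi(-i-j)$; moreover $c_\beta^{r,i}(k,0)\ne0$ for all $0\le k\le p$, and $c_\beta^{r,i}(p+1,l)=0$ for all $0\le l\le p$ (while $c_\beta^{r,i}(p+1,p+1)\neq 0$).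
   Context: $\Bbbk$ is an algebraically closed field of characteristic $0$; $n,w$ positive integers, $\gamma$ a primitive $n$-th root of unity. $H=B(n,w,\gamma)$ is the Hopf algebra generated by $x^{\pm1},g,y$ with relations $xx^{-1}=x^{-1}x=1$, $xg=gx$, $xy=yx$, $yg=\gamma gy$, $y^n=1-x^w=1-g^n$, with $\Delta(x)=x\otimes x$, $\Delta(g)=g\otimes g$, $\Delta(y)=y\otimes g+1\otimes y$, $\varepsilon(x)=\varepsilon(g)=1$, $\varepsilon(y)=0$, $S(x)=x^{-1}$, $S(g)=g^{-1}$, $S(y)=-yg^{-1}$; $G(H)=\{g^jx^k\}$. A (left-left) Yetter-Drinfeld module is a left $H$-module, left $H$-comodule $(V,\cdot,\delta)$ with $\delta(h\cdot v)=h_{(1)}v_{(-1)}S(h_{(3)})\otimes h_{(2)}\cdot v_{(0)}$; simple means no nonzero proper Yetter-Drinfeld submodules. A nonzero $v\in V$ is a standard element of type $(\alpha,\beta,h)$ if $h\in G(H)$, $\alpha,\beta\in\Bbbk^*$, $x\cdot v=\alpha v$, $g\cdot v=\beta v$, $\delta(v)=h\otimes v$. The elements $c_\beta^{r,i}(k,l)\in H$ ($0\le l\le k$) are defined by $c_\beta^{r,i}(0,0)=x^rg^i$ and, for $k\ge0$: $c_\beta^{r,i}(k+1,0)=c_\beta^{r,i}(k,0)S(y)+\beta yc_\beta^{r,i}(k,0)S(g)$; for $0<l<k+1$, $c_\beta^{r,i}(k+1,l)=c_\beta^{r,i}(k,l)S(y)+\beta\gamma^{-l}yc_\beta^{r,i}(k,l)S(g)+c_\beta^{r,i}(k,l-1)S(g)$;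 $c_\beta^{r,i}(k+1,k+1)=c_\beta^{r,i}(k,k)S(g)$. For $i\in\mathbb{Z}$, $\phi(i)$ is the unique integer in $\{1,\dots,n\}$ with $i\equiv\phi(i)\pmod n$. *)

theory Defs
  imports "HOL-Computational_Algebra.Polynomial"
begin

definition alg_closed_field :: "'k::field itself \<Rightarrow> bool" where
  "alg_closed_field _ \<longleftrightarrow> (\<forall>q::'k poly. 0 < degree q \<longrightarrow> (\<exists>z. poly q z = 0))"

definition primitive_root :: "nat \<Rightarrow> 'k::field \<Rightarrow> bool" where
  "primitive_root n \<gamma> \<longleftrightarrow> \<gamma> ^ n = 1 \<and> (\<forall>m. 0 < m \<and> m < n \<longrightarrow> \<gamma> ^ m \<noteq> 1)"

section \<open>The Hopf algebra H = B(n,w,gamma), realised on its PBW basis\<close>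

text \<open>The index (k,a,b) stands for the basis monomial x^k g^a y^b with k an integer,
  0 <= a < n and 0 <= b < n.  An element of H is a finitely supported coefficient
  function on such indices; H (x) H and H (x) H (x) H are treated likewise.\<close>

type_synonym idx = "int \<times> nat \<times> nat"
type_synonym 'k helt = "idx \<Rightarrow> 'k"
type_synonym 'k telt = "idx \<times> idx \<Rightarrow> 'k"
type_synonym 'k t3elt = "idx \<times> idx \<times> idx \<Rightarrow> 'k"

definition fsupp :: "('a \<Rightarrow> 'b::zero) \<Rightarrow> 'a set" where
  "fsupp f = {p. f p \<noteq> 0}"

definition valid_idx :: "nat \<Rightarrow> idx \<Rightarrow> bool" where
  "valid_idx n p \<longleftrightarrow> fst (snd p) < n \<and> snd (snd p) < n"

definition in_H :: "nat \<Rightarrow> 'k::zero helt \<Rightarrow> bool" where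
  "in_H n f \<longleftrightarrow> finite (fsupp f) \<and> (\<forall>p\<in>fsupp f. valid_idx n p)"

definition hbasis :: "idx \<Rightarrow> 'k::{zero,one} helt" where
  "hbasis p = (\<lambda>q. if q = p then 1 else 0)"

definition hzero :: "'k::zero helt" where "hzero = (\<lambda>_. 0)"

definition hadd :: "'k::plus helt \<Rightarrow> 'k helt \<Rightarrow> 'k helt" where
  "hadd f g = (\<lambda>d. f d + g d)"

definition hsmult :: "'k::times \<Rightarrow> 'k helt \<Rightarrow> 'k helt" where
  "hsmult c f = (\<lambda>d. c * f d)"

text \<open>Normal form of the (not necessarily reduced) monomial x^k g^a y^b, using
  g^n = x^w and y^n = 1 - x^w (both central).\<close>

function red :: "nat \<Rightarrow> nat \<Rightarrow> int \<Rightarrow> nat \<Rightarrow> nat \<Rightarrow> 'k::ring_1 helt" where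
  "red n w k a b =
     (if n = 0 then hbasis (k, a, b)
      else if n \<le> b then (\<lambda>q. red n w k a (b - n) q - red n w (k + int w) a (b - n) q)
      else if n \<le> a then red n w (k + int w) (a - n) b
      else hbasis (k, a, b))"
  by pat_completeness auto
termination by (relation "measure (\<lambda>(n, w, k, a, b). a + b)") auto

text \<open>Product of basis monomials:
  (x^k g^a y^b)(x^k' g^a' y^b') = gamma^(b a') x^(k+k') g^(a+a') y^(b+b').\<close>

definition bmul :: "nat \<Rightarrow> nat \<Rightarrow> 'k::field \<Rightarrow> idx \<Rightarrow> idx \<Rightarrow> 'k helt" where
  "bmul n w \<gamma> p q = (case p of (k, a, b) \<Rightarrow> case q of (k', a', b') \<Rightarrow>
      (\<lambda>d. \<gamma> ^ (b * a') * red n w (k + k') (a + a') (b + b') d))"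

definition hmul :: "nat \<Rightarrow> nat \<Rightarrow> 'k::field \<Rightarrow> 'k helt \<Rightarrow> 'k helt \<Rightarrow> 'k helt" where
  "hmul n w \<gamma> f g = (\<lambda>d. \<Sum>p\<in>fsupp f. \<Sum>q\<in>fsupp g. f p * g q * bmul n w \<gamma> p q d)"

definition hone :: "'k::{zero,one} helt" where "hone = hbasis (0, 0, 0)"

definition hpow :: "nat \<Rightarrow> nat \<Rightarrow> 'k::field \<Rightarrow> 'k helt \<Rightarrow> nat \<Rightarrow> 'k helt" where
  "hpow n w \<gamma> f m = ((hmul n w \<gamma> f) ^^ m) hone"

definition hzpow :: "nat \<Rightarrow> nat \<Rightarrow> 'k::field \<Rightarrow> 'k helt \<Rightarrow> 'k helt \<Rightarrow> int \<Rightarrow> 'k helt" where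
  "hzpow n w \<gamma> f finv z = (if 0 \<le> z then hpow n w \<gamma> f (nat z) else hpow n w \<gamma> finv (nat (- z)))"

text \<open>The generators x, x^-1, g, g^-1 (= x^-w g^(n-1)), y.\<close>
definition xH :: "'k::ring_1 helt" where "xH = hbasis (1, 0, 0)"
definition xinvH :: "'k::ring_1 helt" where "xinvH = hbasis (-1, 0, 0)"
definition gH :: "nat \<Rightarrow> nat \<Rightarrow> 'k::ring_1 helt" where "gH n w = red n w 0 1 0"
definition ginvH :: "nat \<Rightarrow> nat \<Rightarrow> 'k::ring_1 helt" where
  "ginvH n w = red n w (- int w) (n - 1) 0"
definition yH :: "nat \<Rightarrow> nat \<Rightarrow> 'k::ring_1 helt" where "yH n w = red n w 0 0 1"

definition xgH :: "nat \<Rightarrow> nat \<Rightarrow> 'k::field \<Rightarrow> int \<Rightarrow> int \<Rightarrow> 'k helt" where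
  "xgH n w \<gamma> r i = hmul n w \<gamma> (hzpow n w \<gamma> xH xinvH r) (hzpow n w \<gamma> (gH n w) (ginvH n w) i)"

definition grouplikes :: "nat \<Rightarrow> nat \<Rightarrow> 'k::field \<Rightarrow> 'k helt set" where
  "grouplikes n w \<gamma> =
     {hmul n w \<gamma> (hzpow n w \<gamma> (gH n w) (ginvH n w) j) (hzpow n w \<gamma> xH xinvH k) | j k. True}"

definition tens :: "'k::times helt \<Rightarrow> 'k helt \<Rightarrow> 'k telt" where
  "tens f g = (\<lambda>(p, q). f p * g q)"

definition tmul :: "nat \<Rightarrow> nat \<Rightarrow> 'k::field \<Rightarrow> 'k telt \<Rightarrow> 'k telt \<Rightarrow> 'k telt" where
  "tmul n w \<gamma> F G = (\<lambda>(d1, d2). \<Sum>P\<in>fsupp F. \<Sum>Q\<in>fsupp G.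
      F P * G Q * bmul n w \<gamma> (fst P) (fst Q) d1 * bmul n w \<gamma> (snd P) (snd Q) d2)"

definition tpow :: "nat \<Rightarrow> nat \<Rightarrow> 'k::field \<Rightarrow> 'k telt \<Rightarrow> nat \<Rightarrow> 'k telt" where
  "tpow n w \<gamma> F m = ((tmul n w \<gamma> F) ^^ m) (tens hone hone)"

definition tzpow :: "nat \<Rightarrow> nat \<Rightarrow> 'k::field \<Rightarrow> 'k telt \<Rightarrow> 'k telt \<Rightarrow> int \<Rightarrow> 'k telt" where
  "tzpow n w \<gamma> F Finv z = (if 0 \<le> z then tpow n w \<gamma> F (nat z) else tpow n w \<gamma> Finv (nat (- z)))"

text \<open>Delta(x) = x(x)x, Delta(g) = g(x)g, Delta(y) = y(x)g + 1(x)y, extended multiplicatively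
  to the basis monomials x^k g^a y^b and then linearly.\<close>
definition Delta_basis :: "nat \<Rightarrow> nat \<Rightarrow> 'k::field \<Rightarrow> idx \<Rightarrow> 'k telt" where
  "Delta_basis n w \<gamma> p = (case p of (k, a, b) \<Rightarrow>
     tmul n w \<gamma>
       (tmul n w \<gamma> (tzpow n w \<gamma> (tens xH xH) (tens xinvH xinvH) k) (tpow n w \<gamma> (tens (gH n w) (gH n w)) a))
       (tpow n w \<gamma> (\<lambda>pq. tens (yH n w) (gH n w) pq + tens hone (yH n w) pq) b))"

definition Delta :: "nat \<Rightarrow> nat \<Rightarrow> 'k::field \<Rightarrow> 'k helt \<Rightarrow> 'k telt" where
  "Delta n w \<gamma> f = (\<lambda>pq. \<Sum>p\<in>fsupp f. f p * Delta_basis n w \<gamma> p pq)"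

text \<open>(Delta (x) id) Delta, i.e. h |-> h_(1) (x) h_(2) (x) h_(3).\<close>
definition Delta3 :: "nat \<Rightarrow> nat \<Rightarrow> 'k::field \<Rightarrow> 'k helt \<Rightarrow> 'k t3elt" where
  "Delta3 n w \<gamma> f = (\<lambda>(b1, b2, b3). \<Sum>q\<in>fsupp (Delta n w \<gamma> f).
      if snd q = b3 then Delta n w \<gamma> f q * Delta_basis n w \<gamma> (fst q) (b1, b2) else 0)"

definition eps_basis :: "idx \<Rightarrow> 'k::field" where
  "eps_basis p = (case p of (k, a, b) \<Rightarrow> (0::'k) ^ b)"

definition counit :: "'k::field helt \<Rightarrow> 'k" where
  "counit f = (\<Sum>p\<in>fsupp f. f p * eps_basis p)"

text \<open>S(x) = x^-1, S(g) = g^-1, S(y) = - y g^-1; S is an anti-homomorphism, so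
  S(x^k g^a y^b) = S(y)^b S(g)^a S(x)^k; extended linearly.\<close>
definition S_basis :: "nat \<Rightarrow> nat \<Rightarrow> 'k::field \<Rightarrow> idx \<Rightarrow> 'k helt" where
  "S_basis n w \<gamma> p = (case p of (k, a, b) \<Rightarrow>
     hmul n w \<gamma>
       (hmul n w \<gamma> (hpow n w \<gamma> (\<lambda>d. - hmul n w \<gamma> (yH n w) (ginvH n w) d) b) (hpow n w \<gamma> (ginvH n w) a))
       (hzpow n w \<gamma> xinvH xH k))"

definition antipode :: "nat \<Rightarrow> nat \<Rightarrow> 'k::field \<Rightarrow> 'k helt \<Rightarrow> 'k helt" where
  "antipode n w \<gamma> f = (\<lambda>d. \<Sum>p\<in>fsupp f. f p * S_basis n w \<gamma> p d)"

text \<open>A module structure is given by the action rho p of each basis monomial p;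
  h . v = sum_p h(p) rho p v.  A comodule structure is given by the coordinate maps
  delta p, where delta(v) = sum_p e_p (x) delta p v.\<close>

definition Hact :: "('k::field \<Rightarrow> 'v \<Rightarrow> 'v) \<Rightarrow> (idx \<Rightarrow> 'v \<Rightarrow> 'v::ab_group_add) \<Rightarrow> 'k helt \<Rightarrow> 'v \<Rightarrow> 'v" where
  "Hact sc \<rho> f v = (\<Sum>p\<in>fsupp f. sc (f p) (\<rho> p v))"

definition YD_module :: "nat \<Rightarrow> nat \<Rightarrow> 'k::field \<Rightarrow> ('k \<Rightarrow> 'v \<Rightarrow> 'v) \<Rightarrow>
    (idx \<Rightarrow> 'v \<Rightarrow> 'v::ab_group_add) \<Rightarrow> (idx \<Rightarrow> 'v \<Rightarrow> 'v) \<Rightarrow> bool" where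
  "YD_module n w \<gamma> sc \<rho> \<delta> \<longleftrightarrow>
     vector_space sc \<and>
     \<comment> \<open>left H-module\<close>
     (\<forall>p. Vector_Spaces.linear sc sc (\<rho> p)) \<and>
     (\<forall>v. Hact sc \<rho> hone v = v) \<and>
     (\<forall>f g v. in_H n f \<longrightarrow> in_H n g \<longrightarrow>
        Hact sc \<rho> (hmul n w \<gamma> f g) v = Hact sc \<rho> f (Hact sc \<rho> g v)) \<and>
     \<comment> \<open>left H-comodule, delta : V -> H (x) V\<close>
     (\<forall>p. Vector_Spaces.linear sc sc (\<delta> p)) \<and>
     (\<forall>p v. \<not> valid_idx n p \<longrightarrow> \<delta> p v = 0) \<and>
     (\<forall>v. finite {p. \<delta> p v \<noteq> 0}) \<and>
     (\<forall>v. (\<Sum>p\<in>{p. \<delta> p v \<noteq> 0}. sc (counit (hbasis p)) (\<delta> p v)) = v) \<and>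
     (\<forall>v p1 p2. (\<Sum>p\<in>{p. \<delta> p v \<noteq> 0}. sc (Delta n w \<gamma> (hbasis p) (p1, p2)) (\<delta> p v))
                 = \<delta> p2 (\<delta> p1 v)) \<and>
     \<comment> \<open>Yetter-Drinfeld compatibility:
        delta(h.v) = h_(1) v_(-1) S(h_(3)) (x) h_(2).v_(0)\<close>
     (\<forall>f v d. in_H n f \<longrightarrow>
        \<delta> d (Hact sc \<rho> f v) =
          (\<Sum>t\<in>fsupp (Delta3 n w \<gamma> f). \<Sum>c\<in>{c. \<delta> c v \<noteq> 0}.
             (case t of (b1, b2, b3) \<Rightarrow>
               sc (Delta3 n w \<gamma> f t *
                   hmul n w \<gamma> (hmul n w \<gamma> (hbasis b1) (hbasis c)) (antipode n w \<gamma> (hbasis b3)) d)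
                  (\<rho> b2 (\<delta> c v)))))"

definition YD_simple :: "nat \<Rightarrow> nat \<Rightarrow> 'k::field \<Rightarrow> ('k \<Rightarrow> 'v \<Rightarrow> 'v) \<Rightarrow>
    (idx \<Rightarrow> 'v \<Rightarrow> 'v::ab_group_add) \<Rightarrow> (idx \<Rightarrow> 'v \<Rightarrow> 'v) \<Rightarrow> bool" where
  "YD_simple n w \<gamma> sc \<rho> \<delta> \<longleftrightarrow>
     YD_module n w \<gamma> sc \<rho> \<delta> \<and>
     (\<forall>W. module.subspace sc W \<and>
          (\<forall>f. in_H n f \<longrightarrow> (\<forall>u\<in>W. Hact sc \<rho> f u \<in> W)) \<and>
          (\<forall>p. \<forall>u\<in>W. \<delta> p u \<in> W)
        \<longrightarrow> W = {0} \<or> W = UNIV)"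

definition standard_elem :: "nat \<Rightarrow> nat \<Rightarrow> 'k::field \<Rightarrow> ('k \<Rightarrow> 'v \<Rightarrow> 'v) \<Rightarrow>
    (idx \<Rightarrow> 'v \<Rightarrow> 'v::ab_group_add) \<Rightarrow> (idx \<Rightarrow> 'v \<Rightarrow> 'v) \<Rightarrow> 'v \<Rightarrow> 'k \<Rightarrow> 'k \<Rightarrow> 'k helt \<Rightarrow> bool" where
  "standard_elem n w \<gamma> sc \<rho> \<delta> v \<alpha> \<beta> h \<longleftrightarrow>
     v \<noteq> 0 \<and> h \<in> grouplikes n w \<gamma> \<and> \<alpha> \<noteq> 0 \<and> \<beta> \<noteq> 0 \<and>
     Hact sc \<rho> xH v = sc \<alpha> v \<and> Hact sc \<rho> (gH n w) v = sc \<beta> v \<and>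
     (\<forall>p. \<delta> p v = sc (h p) v)"

fun cc :: "nat \<Rightarrow> nat \<Rightarrow> 'k::field \<Rightarrow> 'k \<Rightarrow> int \<Rightarrow> int \<Rightarrow> nat \<Rightarrow> nat \<Rightarrow> 'k helt" where
  "cc n w \<gamma> \<beta> r i 0 l = (if l = 0 then xgH n w \<gamma> r i else hzero)"
| "cc n w \<gamma> \<beta> r i (Suc k) l =
     (let Sy = antipode n w \<gamma> (yH n w); Sg = antipode n w \<gamma> (gH n w); y = yH n w in
      if l = 0 then
        hadd (hmul n w \<gamma> (cc n w \<gamma> \<beta> r i k 0) Sy)
             (hsmult \<beta> (hmul n w \<gamma> (hmul n w \<gamma> y (cc n w \<gamma> \<beta> r i k 0)) Sg))
      else if l < Suc k then
        hadd (hadd (hmul n w \<gamma> (cc n w \<gamma> \<beta> r i k l) Sy)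
                   (hsmult (\<beta> * inverse (\<gamma> ^ l)) (hmul n w \<gamma> (hmul n w \<gamma> y (cc n w \<gamma> \<beta> r i k l)) Sg)))
             (hmul n w \<gamma> (cc n w \<gamma> \<beta> r i k (l - 1)) Sg)
      else if l = Suc k then hmul n w \<gamma> (cc n w \<gamma> \<beta> r i k k) Sg
      else hzero)"

definition phi :: "nat \<Rightarrow> int \<Rightarrow> int" where
  "phi n i = (THE m. 1 \<le> m \<and> m \<le> int n \<and> i mod int n = m mod int n)"

end

theory Submission
  imports Defs "HOL-Library.Nat_Bijection"
begin

text \<open>Put Q = gamma^-1 and c = beta gamma^i.  Computing in the PBW basis x^k g^a y^b, an induction on k
  gives c(k,l) = lambda(k,l) x^r g^(i-k) y^(k-l) with
  lambda(k,l) = Q^((k-l)(k-l+1)/2) [k choose l]_Q prod_(l<=s<k) (c Q^s - 1),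
  so c(k,l) vanishes exactly when the Gaussian binomial does (as it does for k = n, 0 < l < n)
  or some c Q^s - 1 with l <= s < k does.

  On the module side, the vectors u_b = y^b . v are g-eigenvectors with eigenvalues beta Q^b, pairwise
  distinct for b < n, with u_n = (1 - beta^n) v and delta(u_k) = sum_l c(k,l) (x) u_l.  Hence the span of
  u_0, ..., u_(n-1) is a Yetter-Drinfeld submodule, so it is V, and u_0, ..., u_(m-1) is a basis of V for the
  first m with u_m = 0 (m = n if beta^n <> 1).  If beta = gamma^j, then c Q^s = 1 exactly for
  s = (i+j) mod n; delta(u_m) = 0 forces this s below m, and if s + 1 < m, the u_b with s < b < m would
  span a proper submodule.  So dim V = (i+j) mod n + 1.\<close>

section \<open>Gaussian binomial coefficients\<close>

fun qbinom :: "'a::comm_ring_1 \<Rightarrow> nat \<Rightarrow> nat \<Rightarrow> 'a" where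
  "qbinom Q k 0 = 1"
| "qbinom Q 0 (Suc l) = 0"
| "qbinom Q (Suc k) (Suc l) = Q ^ Suc l * qbinom Q k (Suc l) + qbinom Q k l"

lemma qbinom_eq_0_if_less: "k < l \<Longrightarrow> qbinom Q k l = 0"
proof (induction k arbitrary: l)
  case 0
  then show ?case by (cases l) auto
next
  case (Suc k)
  then show ?case by (cases l) auto
qed

lemma qbinom_self [simp]: "qbinom Q k k = 1"
  by (induction k) (auto simp: qbinom_eq_0_if_less)

lemma qbinom_Suc_Suc': "qbinom Q (Suc k) (Suc l) = qbinom Q k (Suc l) + Q ^ (k - l) * qbinom Q k l"
proof (induction k arbitrary: l)
  case 0
  then show ?case by (cases l) auto
next
  case (Suc k)
  show ?case
  proof (cases l)
    case 0
    then show ?thesis using Suc.IH[of 0] by (simp add: algebra_simps)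
  next
    case (Suc l')
    have lhs: "qbinom Q (Suc (Suc k)) (Suc l)
        = Q ^ Suc l * (qbinom Q k (Suc l) + Q ^ (k - l) * qbinom Q k l)
          + (qbinom Q k l + Q ^ (k - l') * qbinom Q k l')"
      using Suc.IH[of l] Suc.IH[of l'] Suc by simp
    have rhs: "qbinom Q (Suc k) (Suc l) + Q ^ (Suc k - l) * qbinom Q (Suc k) l
        = (Q ^ Suc l * qbinom Q k (Suc l) + qbinom Q k l)
          + Q ^ (Suc k - l) * (Q ^ l * qbinom Q k l + qbinom Q k l')"
      using Suc by simp
    have k_l': "k - l' = Suc k - l"
      using Suc by simp
    show ?thesis
    proof (cases "l \<le> k")
      case True
      then have "Suc l + (k - l) = (Suc k - l) + l"
        by simp
      then have "Q ^ Suc l * Q ^ (k - l) = Q ^ (Suc k - l) * Q ^ l"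
        by (metis power_add)
      then show ?thesis
        unfolding lhs rhs k_l' by (simp add: algebra_simps)
    next
      case False
      then show ?thesis
        unfolding lhs rhs k_l' by (simp add: qbinom_eq_0_if_less algebra_simps)
    qed
  qed
qed

lemma qbinom_Suc_right: "(Q ^ Suc l - 1) * qbinom Q k (Suc l) = (Q ^ (k - l) - 1) * qbinom Q k l"
  using qbinom_Suc_Suc'[of Q k l] by (simp add: algebra_simps)

lemma qbinom_root_of_unity:
  fixes Q :: "'a::field"
  assumes "Q ^ n = 1" and "\<And>l. 0 < l \<Longrightarrow> l < n \<Longrightarrow> Q ^ l \<noteq> 1"
  shows "0 < l \<Longrightarrow> l < n \<Longrightarrow> qbinom Q n l = 0"
proof (induction l)
  case 0
  then show ?case by simp
next
  case (Suc l)
  have "(Q ^ Suc l - 1) * qbinom Q n (Suc l) = (Q ^ (n - l) - 1) * qbinom Q n l"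
    by (rule qbinom_Suc_right)
  also have "\<dots> = 0"
    using Suc assms(1) by (cases l) simp_all
  finally show ?case
    using assms(2)[of "Suc l"] Suc.prems by simp
qed

text \<open>The coefficient in c(k,l) = cc_coeff Q c k l * x^r g^(i-k) y^(k-l), where Q = gamma^-1 and
  c = beta gamma^i.\<close>

definition cc_coeff :: "'a::field \<Rightarrow> 'a \<Rightarrow> nat \<Rightarrow> nat \<Rightarrow> 'a" where
  "cc_coeff Q c k l =
     (if l \<le> k then Q ^ triangle (k - l) * qbinom Q k l * (\<Prod>s\<in>{l..<k}. c * Q ^ s - 1) else 0)"

lemma cc_coeff_self: "cc_coeff Q c k k = 1"
  by (simp add: cc_coeff_def)

lemma cc_coeff_Suc_0: "cc_coeff Q c (Suc k) 0 = Q ^ Suc k * (c * Q ^ k - 1) * cc_coeff Q c k 0"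
  by (simp add: cc_coeff_def prod.atLeastLessThan_Suc power_add algebra_simps)

lemma cc_coeff_Suc:
  assumes "0 < l" "l \<le> k"
  shows "cc_coeff Q c (Suc k) l
           = Q ^ (Suc k - l) * ((c * Q ^ (k + l) - 1) * cc_coeff Q c k l + cc_coeff Q c k (l - 1))"
proof -
  obtain l' where l: "l = Suc l'"
    using assms by (cases l) auto
  let ?P = "\<Prod>s\<in>{l..<k}. c * Q ^ s - 1"
  have prod_Suc: "(\<Prod>s\<in>{l..<Suc k}. c * Q ^ s - 1) = ?P * (c * Q ^ k - 1)"
    using assms by (simp add: prod.atLeastLessThan_Suc)
  have prod_pred: "(\<Prod>s\<in>{l'..<k}. c * Q ^ s - 1) = (c * Q ^ l' - 1) * ?P"
    using assms l by (simp add: prod.atLeast_Suc_lessThan)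
  have k_l: "k - l' = Suc (k - l)" "Suc k - l = Suc (k - l)"
    using assms l by simp_all
  have tri_Suc: "Q ^ triangle (Suc k - l) = Q ^ triangle (k - l) * Q ^ (Suc k - l)"
    unfolding k_l by (simp add: power_add)
  have tri_pred: "Q ^ triangle (k - l') = Q ^ triangle (k - l) * Q ^ (Suc k - l)"
    unfolding k_l by (simp add: power_add)
  have pascal: "qbinom Q (Suc k) l * (c * Q ^ k - 1)
      = (c * Q ^ (k + l) - 1) * qbinom Q k l + Q ^ (Suc k - l) * (c * Q ^ l' - 1) * qbinom Q k l'"
  proof -
    have "Q ^ (Suc k - l) * Q ^ l' = Q ^ k"
      using assms l by (simp flip: power_add)
    moreover have "qbinom Q (Suc k) l = Q ^ l * qbinom Q k l + qbinom Q k l'"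
      using l by simp
    moreover have "qbinom Q (Suc k) l = qbinom Q k l + Q ^ (Suc k - l) * qbinom Q k l'"
      using l qbinom_Suc_Suc'[of Q k l'] by simp
    ultimately show ?thesis
      by (simp add: algebra_simps power_add)
  qed
  have "cc_coeff Q c (Suc k) l
      = Q ^ triangle (k - l) * Q ^ (Suc k - l) * ?P * (qbinom Q (Suc k) l * (c * Q ^ k - 1))"
    using assms by (simp add: cc_coeff_def tri_Suc prod_Suc mult_ac)
  also have "\<dots> = Q ^ (Suc k - l) * ((c * Q ^ (k + l) - 1) * (Q ^ triangle (k - l) * qbinom Q k l * ?P)
      + Q ^ triangle (k - l') * qbinom Q k l' * (\<Prod>s\<in>{l'..<k}. c * Q ^ s - 1))"
    unfolding pascal tri_pred prod_pred by (simp only: algebra_simps)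
  also have "\<dots> = Q ^ (Suc k - l) * ((c * Q ^ (k + l) - 1) * cc_coeff Q c k l + cc_coeff Q c k (l - 1))"
    using assms l by (simp add: cc_coeff_def)
  finally show ?thesis .
qed

lemma cc_coeff_0_eq_0_iff:
  fixes Q :: "'a::field"
  assumes "Q \<noteq> 0"
  shows "cc_coeff Q c k 0 = 0 \<longleftrightarrow> (\<exists>s<k. c * Q ^ s = 1)"
  using assms by (auto simp: cc_coeff_def)

lemma cc_coeff_eq_0_if_root:
  assumes "l \<le> s" "s < k" "c * Q ^ s = 1"
  shows "cc_coeff Q c k l = 0"
proof -
  have "(\<Prod>s\<in>{l..<k}. c * Q ^ s - 1) = 0"
    using assms by (metis atLeastLessThan_iff finite_atLeastLessThan prod_zero_iff right_minus_eq)
  then show ?thesis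
    by (simp add: cc_coeff_def)
qed

section \<open>Roots of unity\<close>

lemma pow_add_mult_self: "(\<gamma>::'a::comm_ring_1) ^ n = 1 \<Longrightarrow> \<gamma> ^ (x + n * y) = \<gamma> ^ x"
  by (simp add: power_add power_mult)

lemma primitive_root_pow_eq_1_iff:
  assumes "primitive_root n (\<gamma>::'k::field)" "0 < n"
  shows "\<gamma> ^ m = 1 \<longleftrightarrow> n dvd m"
proof -
  have root: "\<gamma> ^ n = 1" and prim: "\<And>l. 0 < l \<Longrightarrow> l < n \<Longrightarrow> \<gamma> ^ l \<noteq> 1"
    using assms(1) by (auto simp: primitive_root_def)
  have "\<gamma> ^ m = \<gamma> ^ (m mod n + n * (m div n))"
    by simp
  also have "\<dots> = \<gamma> ^ (m mod n)"
    by (rule pow_add_mult_self[OF root])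
  finally have m_mod: "\<gamma> ^ m = \<gamma> ^ (m mod n)" .
  show ?thesis
  proof (cases "m mod n = 0")
    case True
    then show ?thesis
      using m_mod by (simp add: dvd_eq_mod_eq_0)
  next
    case False
    then show ?thesis
      using m_mod prim[of "m mod n"] assms(2) by (simp add: dvd_eq_mod_eq_0)
  qed
qed

lemma primitive_root_powi_eq_1_iff:
  assumes "primitive_root n (\<gamma>::'k::field)" "0 < n"
  shows "\<gamma> powi z = 1 \<longleftrightarrow> int n dvd z"
proof -
  have root: "\<gamma> ^ n = 1"
    using assms(1) by (simp add: primitive_root_def)
  have "\<gamma> \<noteq> 0"
  proof
    assume "\<gamma> = 0"
    then show False
      using root assms(2) by (simp add: power_0_left)
  qed
  have z: "z = int n * (z div int n) + z mod int n"
    by simp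
  have "\<gamma> powi z = \<gamma> powi (int n * (z div int n)) * \<gamma> powi (z mod int n)"
    by (subst z, rule power_int_add) (simp add: \<open>\<gamma> \<noteq> 0\<close>)
  also have "\<dots> = \<gamma> ^ nat (z mod int n)"
    using assms(2) by (simp add: power_int_mult root power_int_nonneg_exp)
  finally have "\<gamma> powi z = 1 \<longleftrightarrow> n dvd nat (z mod int n)"
    using primitive_root_pow_eq_1_iff[OF assms] by simp
  also have "\<dots> \<longleftrightarrow> z mod int n = 0"
  proof
    assume "n dvd nat (z mod int n)"
    moreover have "0 \<le> z mod int n" "nat (z mod int n) < n"
      using assms(2) by (simp_all add: nat_less_iff)
    ultimately show "z mod int n = 0"
      using dvd_imp_le[of n "nat (z mod int n)"] by linarith
  qed simp
  finally show ?thesis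
    by auto
qed

lemma primitive_root_pow_inj:
  assumes "primitive_root n (\<gamma>::'k::field)" "b < n" "b' < n" "\<gamma> ^ b = \<gamma> ^ b'"
  shows "b = b'"
proof -
  have "b = b'" if "\<gamma> ^ b = \<gamma> ^ b'" "b \<le> b'" "b' < n" for b b'
  proof -
    have "\<gamma> ^ b * \<gamma> ^ (b' - b) = \<gamma> ^ b * 1"
      using that(1,2) by (metis le_add_diff_inverse mult_1_right power_add)
    moreover have "\<gamma> \<noteq> 0"
      using assms(1) that(3) by (auto simp: primitive_root_def power_0_left)
    ultimately have "\<gamma> ^ (b' - b) = 1"
      by simp
    then have "n dvd b' - b"
      using primitive_root_pow_eq_1_iff[OF assms(1)] that by simp
    then show "b = b'"
      using that dvd_imp_le[of n "b' - b"] by (cases "b' - b = 0") auto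
  qed
  then show ?thesis
    using assms(2-4) by (metis linorder_le_cases)
qed

lemma phi_eq:
  assumes "0 < n"
  shows "phi n z = (if z mod int n = 0 then int n else z mod int n)" (is "_ = ?m")
  unfolding phi_def
proof (rule the_equality)
  have "0 \<le> z mod int n" "z mod int n < int n"
    using assms by simp_all
  then show "1 \<le> ?m \<and> ?m \<le> int n \<and> z mod int n = ?m mod int n"
    by auto
next
  fix m
  assume "1 \<le> m \<and> m \<le> int n \<and> z mod int n = m mod int n"
  then show "m = ?m"
    by (cases "m = int n") auto
qed

lemma int_minus_phi_uminus:
  assumes "0 < n"
  shows "int n - phi n (- z) = z mod int n"
proof -
  have "(- z) mod int n = (if z mod int n = 0 then 0 else int n - z mod int n)"
    by (simp add: zmod_zminus1_eq_if)
  moreover have "z mod int n < int n"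
    using assms by simp
  ultimately show ?thesis
    using assms by (auto simp: phi_eq)
qed

lemma (in vector_space) module_hom_image_span_subset:
  assumes "module_hom scale scale L" "x \<in> span S" "L ` S \<subseteq> span S'"
  shows "L x \<in> span S'"
proof -
  have "L x \<in> span (L ` S)"
    using module_hom.span_image[OF assms(1)] assms(2) by blast
  also have "\<dots> \<subseteq> span S'"
    using assms(3) by (simp add: span_minimal)
  finally show ?thesis .
qed

lemma (in vector_space) sum_scale_module_hom_swap:
  assumes "finite C" "module_hom scale scale L" "\<And>l. l \<le> k \<Longrightarrow> a l = (\<Sum>c\<in>C. F l c * x c)"
  shows "(\<Sum>c\<in>C. scale (x c) (L (\<Sum>l\<le>k. scale (F l c) (u l)))) = (\<Sum>l\<le>k. scale (a l) (L (u l)))"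
proof -
  have "(\<Sum>c\<in>C. scale (x c) (L (\<Sum>l\<le>k. scale (F l c) (u l))))
      = (\<Sum>c\<in>C. \<Sum>l\<le>k. scale (F l c * x c) (L (u l)))"
    by (simp add: module_hom.sum[OF assms(2)] module_hom.scale[OF assms(2)] scale_sum_right mult.commute)
  also have "\<dots> = (\<Sum>l\<le>k. \<Sum>c\<in>C. scale (F l c * x c) (L (u l)))"
    by (rule sum.swap)
  also have "\<dots> = (\<Sum>l\<le>k. scale (a l) (L (u l)))"
    using assms(3) by (simp add: scale_sum_left)
  finally show ?thesis .
qed

lemma (in vector_space) sum_atMost_shift_scale:
  "(\<Sum>l\<le>k. scale (a l) (u l)) + (\<Sum>l\<le>k. scale (b l) (u (Suc l)))
     = (\<Sum>l\<le>Suc k. scale ((if l \<le> k then a l else 0) + (if l = 0 then 0 else b (l - 1))) (u l))"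
proof -
  have "(\<Sum>l\<le>Suc k. scale (if l \<le> k then a l else 0) (u l)) = (\<Sum>l\<le>k. scale (a l) (u l))"
    by simp
  moreover have "(\<Sum>l\<le>Suc k. scale (if l = 0 then 0 else b (l - 1)) (u l)) = (\<Sum>l\<le>k. scale (b l) (u (Suc l)))"
    by (simp only: sum.atMost_Suc_shift) simp
  ultimately show ?thesis
    by (simp add: scale_left_distrib sum.distrib)
qed

section \<open>Arithmetic of the normal forms\<close>

declare red.simps [simp del]

lemma fsupp_hbasis [simp]: "fsupp (hbasis p :: 'a::zero_neq_one helt) = {p}"
  by (auto simp: fsupp_def hbasis_def)

lemma fsupp_diff_subset: "fsupp (\<lambda>q. f q - g q :: 'a::ab_group_add) \<subseteq> fsupp f \<union> fsupp g"
  by (auto simp: fsupp_def)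

lemma fsupp_add_subset: "fsupp (\<lambda>q. f q + g q :: 'a::ab_group_add) \<subseteq> fsupp f \<union> fsupp g"
  by (auto simp: fsupp_def)

lemma fsupp_smult_subset: "fsupp (\<lambda>q. c * f q :: 'a::field) \<subseteq> fsupp f"
  by (auto simp: fsupp_def)

lemma finite_fsupp_diff:
  "finite (fsupp f) \<Longrightarrow> finite (fsupp g) \<Longrightarrow> finite (fsupp (\<lambda>q. f q - g q :: 'a::ab_group_add))"
  by (rule finite_subset[OF fsupp_diff_subset]) simp

lemma finite_fsupp_add:
  "finite (fsupp f) \<Longrightarrow> finite (fsupp g) \<Longrightarrow> finite (fsupp (\<lambda>q. f q + g q :: 'a::ab_group_add))"
  by (rule finite_subset[OF fsupp_add_subset]) simp

lemma finite_fsupp_smult: "finite (fsupp f) \<Longrightarrow> finite (fsupp (\<lambda>q. c * f q :: 'a::field))"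
  by (rule finite_subset[OF fsupp_smult_subset])

lemma finite_fsupp_sum:
  "finite A \<Longrightarrow> (\<And>c. c \<in> A \<Longrightarrow> finite (fsupp (F c)))
    \<Longrightarrow> finite (fsupp (\<lambda>d. \<Sum>c\<in>A. F c d :: 'a::ab_group_add))"
proof (induction A rule: finite_induct)
  case empty
  then show ?case by (simp add: fsupp_def)
next
  case (insert x A)
  then show ?case using finite_fsupp_add[of "F x" "\<lambda>d. \<Sum>c\<in>A. F c d"] by simp
qed

lemma red_reduced: "0 < n \<Longrightarrow> a < n \<Longrightarrow> b < n \<Longrightarrow> red n w k a b = hbasis (k, a, b)"
  by (subst red.simps) simp

lemma red_y_overflow:
  "0 < n \<Longrightarrow> n \<le> b \<Longrightarrow> red n w k a b = (\<lambda>q. red n w k a (b - n) q - red n w (k + int w) a (b - n) q)"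
  by (subst red.simps) simp

lemma red_g_overflow:
  assumes "0 < n" "n \<le> a"
  shows "red n w k a b = (red n w (k + int w) (a - n) b :: 'a::ring_1 helt)"
proof (induction b arbitrary: k rule: less_induct)
  case (less b)
  show ?case
  proof (cases "n \<le> b")
    case True
    then have "b - n < b"
      using assms by simp
    then show ?thesis
      using less True assms by (simp add: red_y_overflow[of n b])
  next
    case False
    then show ?thesis
      using assms by (subst red.simps) simp
  qed
qed

lemma red_induct [consumes 1, case_names overflow_y overflow_g reduced]:
  fixes n :: nat and P :: "int \<Rightarrow> nat \<Rightarrow> nat \<Rightarrow> bool"
  assumes "0 < n"
    and "\<And>k a b. n \<le> b \<Longrightarrow> (\<And>k. P k a (b - n)) \<Longrightarrow> P k a b"
    and "\<And>k a b. b < n \<Longrightarrow> n \<le> a \<Longrightarrow> (\<And>k. P k (a - n) b) \<Longrightarrow> P k a b"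
    and "\<And>k a b. a < n \<Longrightarrow> b < n \<Longrightarrow> P k a b"
  shows "P k a b"
proof (induction "a + b" arbitrary: k a b rule: less_induct)
  case less
  consider "n \<le> b" | "b < n" "n \<le> a" | "a < n" "b < n"
    by linarith
  then show ?case
  proof cases
    case 1
    show ?thesis
    proof (rule assms(2))
      show "P k' a (b - n)" for k'
        using 1 assms(1) by (intro less.hyps) auto
    qed (use 1 in simp)
  next
    case 2
    show ?thesis
    proof (rule assms(3))
      show "P k' (a - n) b" for k'
        using 2 assms(1) by (intro less.hyps) auto
    qed (use 2 in simp_all)
  next
    case 3
    then show ?thesis by (rule assms(4))
  qed
qed

lemma in_H_red:
  assumes "0 < n"
  shows "in_H n (red n w k a b :: 'a::ring_1 helt)"
  using assms
proof (induction k a b rule: red_induct)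
  case (overflow_y k a b)
  then show ?case
    using assms fsupp_diff_subset[of "red n w k a (b - n)" "red n w (k + int w) a (b - n)"]
    by (simp add: red_y_overflow in_H_def finite_fsupp_diff) blast
next
  case (overflow_g k a b)
  then show ?case
    using assms by (simp add: red_g_overflow)
next
  case (reduced k a b)
  then show ?case
    using assms by (simp add: red_reduced in_H_def valid_idx_def)
qed

lemma finite_fsupp_red: "0 < n \<Longrightarrow> finite (fsupp (red n w k a b :: 'a::ring_1 helt))"
  using in_H_red[of n w k a b, where 'a='a] by (simp add: in_H_def)

lemma red_lowest_coeff:
  assumes "0 < n" "0 < w"
  shows "(red n w k a b :: 'a::ring_1 helt) (k + int w * int (a div n), a mod n, b mod n) = 1 \<and>
         (\<forall>k2 a2 b2. k2 < k + int w * int (a div n) \<longrightarrow> (red n w k a b :: 'a helt) (k2, a2, b2) = 0)"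
  using assms(1)
proof (induction k a b rule: red_induct)
  case (overflow_y k a b)
  moreover have "(b - n) mod n = b mod n"
    using overflow_y by (simp add: mod_if)
  ultimately show ?case
    using assms overflow_y.IH[of k] overflow_y.IH[of "k + int w"] by (auto simp: red_y_overflow)
next
  case (overflow_g k a b)
  have "a div n = Suc ((a - n) div n)" "(a - n) mod n = a mod n"
    using overflow_g assms by (simp_all add: div_if mod_if)
  moreover have "k + int w * int (a div n) = (k + int w) + int w * int ((a - n) div n)"
    using \<open>a div n = Suc ((a - n) div n)\<close> by (simp add: algebra_simps)
  ultimately show ?case
    unfolding red_g_overflow[OF assms(1) \<open>n \<le> a\<close>]
    using overflow_g.IH[of "k + int w"] by (simp add: add.assoc)
next
  case (reduced k a b)
  then show ?case
    using assms by (auto simp: red_reduced hbasis_def)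
qed

lemma red_neq_hzero: "0 < n \<Longrightarrow> 0 < w \<Longrightarrow> red n w k a b \<noteq> (hzero :: 'a::ring_1 helt)"
  using red_lowest_coeff[of n w k a b, where 'a='a] by (auto simp: hzero_def)

lemma hmul_expand:
  assumes "finite A" "fsupp f \<subseteq> A" "finite B" "fsupp g \<subseteq> B"
  shows "hmul n w \<gamma> f g d = (\<Sum>p\<in>A. \<Sum>q\<in>B. f p * g q * bmul n w \<gamma> p q d)"
proof -
  have "hmul n w \<gamma> f g d = (\<Sum>p\<in>A. \<Sum>q\<in>fsupp g. f p * g q * bmul n w \<gamma> p q d)"
    unfolding hmul_def by (rule sum.mono_neutral_left) (use assms in \<open>auto simp: fsupp_def\<close>)
  also have "\<dots> = (\<Sum>p\<in>A. \<Sum>q\<in>B. f p * g q * bmul n w \<gamma> p q d)"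
    by (rule sum.cong[OF refl], rule sum.mono_neutral_left) (use assms in \<open>auto simp: fsupp_def\<close>)
  finally show ?thesis .
qed

lemma hmul_diff_left:
  assumes "finite (fsupp f)" "finite (fsupp f')" "finite (fsupp g)"
  shows "hmul n w \<gamma> (\<lambda>d. f d - f' d) g = (\<lambda>d. hmul n w \<gamma> f g d - hmul n w \<gamma> f' g d)"
  using assms fsupp_diff_subset[of f f']
  by (simp add: fun_eq_iff hmul_expand[of "fsupp f \<union> fsupp f'" _ "fsupp g"] sum_subtractf[symmetric]
      algebra_simps)

lemma hmul_add_left:
  assumes "finite (fsupp f)" "finite (fsupp f')" "finite (fsupp g)"
  shows "hmul n w \<gamma> (\<lambda>d. f d + f' d) g = (\<lambda>d. hmul n w \<gamma> f g d + hmul n w \<gamma> f' g d)"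
  using assms fsupp_add_subset[of f f']
  by (simp add: fun_eq_iff hmul_expand[of "fsupp f \<union> fsupp f'" _ "fsupp g"] sum.distrib[symmetric]
      algebra_simps)

lemma hmul_smult_left:
  assumes "finite (fsupp f)" "finite (fsupp g)"
  shows "hmul n w \<gamma> (\<lambda>d. c * f d) g = (\<lambda>d. c * hmul n w \<gamma> f g d)"
  using assms fsupp_smult_subset[of c f]
  by (simp add: fun_eq_iff hmul_expand[of "fsupp f" _ "fsupp g"] sum_distrib_left algebra_simps)

lemma hmul_diff_right:
  assumes "finite (fsupp f)" "finite (fsupp g)" "finite (fsupp g')"
  shows "hmul n w \<gamma> f (\<lambda>d. g d - g' d) = (\<lambda>d. hmul n w \<gamma> f g d - hmul n w \<gamma> f g' d)"
  using assms fsupp_diff_subset[of g g']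
  by (simp add: fun_eq_iff hmul_expand[of "fsupp f" _ "fsupp g \<union> fsupp g'"] sum_subtractf[symmetric]
      algebra_simps)

lemma hmul_smult_right:
  assumes "finite (fsupp f)" "finite (fsupp g)"
  shows "hmul n w \<gamma> f (\<lambda>d. c * g d) = (\<lambda>d. c * hmul n w \<gamma> f g d)"
  using assms fsupp_smult_subset[of c g]
  by (simp add: fun_eq_iff hmul_expand[of "fsupp f" _ "fsupp g"] sum_distrib_left algebra_simps)

lemma hmul_sum_left:
  assumes "finite A" "\<And>c. c \<in> A \<Longrightarrow> finite (fsupp (F c))" "finite (fsupp g)"
  shows "hmul n w \<gamma> (\<lambda>d. \<Sum>c\<in>A. F c d) g = (\<lambda>d. \<Sum>c\<in>A. hmul n w \<gamma> (F c) g d)"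
  using assms
proof (induction A rule: finite_induct)
  case empty
  then show ?case by (simp add: hmul_def fsupp_def)
next
  case (insert x A)
  then show ?case
    by (simp add: hmul_add_left finite_fsupp_sum)
qed

lemma hmul_hbasis: "hmul n w \<gamma> (hbasis p) (hbasis q) = bmul n w \<gamma> p q"
  by (rule ext) (simp only: hmul_def fsupp_hbasis, simp add: hbasis_def)

lemma finite_fsupp_bmul: "0 < n \<Longrightarrow> finite (fsupp (bmul n w \<gamma> p q :: 'k::field helt))"
  by (cases p; cases q) (simp add: bmul_def finite_fsupp_smult finite_fsupp_red)

lemma hmul_hbasis_left:
  assumes "finite A" "fsupp f \<subseteq> A"
  shows "hmul n w \<gamma> (hbasis b) f = (\<lambda>d. \<Sum>c\<in>A. f c * bmul n w \<gamma> b c d)"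
proof
  fix d
  have "hmul n w \<gamma> (hbasis b) f d = (\<Sum>p\<in>{b}. \<Sum>q\<in>A. hbasis b p * f q * bmul n w \<gamma> p q d)"
    by (rule hmul_expand) (simp_all add: assms)
  then show "hmul n w \<gamma> (hbasis b) f d = (\<Sum>c\<in>A. f c * bmul n w \<gamma> b c d)"
    by (simp add: hbasis_def)
qed

lemma hmul_one_left:
  assumes "0 < n" "in_H n f"
  shows "hmul n w \<gamma> hone f = f"
proof
  fix d
  have fin: "finite (fsupp f)"
    using assms by (simp add: in_H_def)
  have "hmul n w \<gamma> hone f d = (\<Sum>c\<in>fsupp f. f c * bmul n w \<gamma> (0, 0, 0) c d)"
    unfolding hone_def hmul_hbasis_left[OF fin subset_refl] ..
  also have "\<dots> = (\<Sum>c\<in>fsupp f. if c = d then f d else 0)"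
  proof (rule sum.cong[OF refl])
    fix c
    assume "c \<in> fsupp f"
    then have "valid_idx n c"
      using assms by (simp add: in_H_def)
    then show "f c * bmul n w \<gamma> (0, 0, 0) c d = (if c = d then f d else 0)"
      using assms by (cases c) (simp add: bmul_def red_reduced valid_idx_def hbasis_def)
  qed
  also have "\<dots> = f d"
    using fin by (simp add: fsupp_def)
  finally show "hmul n w \<gamma> hone f d = f d" .
qed

lemma hmul_eq_sum_hbasis_left:
  assumes "finite A" "fsupp f \<subseteq> A" "finite (fsupp g)"
  shows "hmul n w \<gamma> f g d = (\<Sum>c\<in>A. f c * hmul n w \<gamma> (hbasis c) g d)"
proof -
  have "hmul n w \<gamma> (hbasis c) g d = (\<Sum>p\<in>{c}. \<Sum>q\<in>fsupp g. hbasis c p * g q * bmul n w \<gamma> p q d)" for c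
    by (rule hmul_expand) (simp_all add: assms(3))
  then have "hmul n w \<gamma> (hbasis c) g d = (\<Sum>q\<in>fsupp g. g q * bmul n w \<gamma> c q d)" for c
    by (simp add: hbasis_def)
  then show ?thesis
    using hmul_expand[OF assms(1,2,3) subset_refl] by (simp add: sum_distrib_left mult.assoc)
qed

lemma hmul_hmul_hbasis_eq_sum:
  assumes "0 < n" "finite A" "fsupp f \<subseteq> A" "finite (fsupp g)"
  shows "hmul n w \<gamma> (hmul n w \<gamma> (hbasis b) f) g d
           = (\<Sum>c\<in>A. f c * hmul n w \<gamma> (hmul n w \<gamma> (hbasis b) (hbasis c)) g d)"
proof -
  have "hmul n w \<gamma> (hmul n w \<gamma> (hbasis b) f) g = hmul n w \<gamma> (\<lambda>d. \<Sum>c\<in>A. f c * bmul n w \<gamma> b c d) g"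
    unfolding hmul_hbasis_left[OF assms(2,3)] ..
  also have "\<dots> = (\<lambda>d. \<Sum>c\<in>A. hmul n w \<gamma> (\<lambda>d. f c * bmul n w \<gamma> b c d) g d)"
    by (rule hmul_sum_left) (auto intro!: finite_fsupp_smult finite_fsupp_bmul[OF assms(1)] simp: assms)
  also have "\<dots> = (\<lambda>d. \<Sum>c\<in>A. f c * hmul n w \<gamma> (hmul n w \<gamma> (hbasis b) (hbasis c)) g d)"
    by (simp add: hmul_smult_left[OF finite_fsupp_bmul[OF assms(1)] assms(4)] hmul_hbasis)
  finally show ?thesis
    by simp
qed

lemma hmul_red_hbasis:
  assumes "0 < n" "(\<gamma>::'k::field) ^ n = 1" "a' < n" "b' < n"
  shows "hmul n w \<gamma> (red n w k a b) (hbasis (k', a', b'))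
           = (\<lambda>d. \<gamma> ^ (b * a') * red n w (k + k') (a + a') (b + b') d)"
  using assms(1)
proof (induction k a b rule: red_induct)
  case (overflow_y k a b)
  have "\<gamma> ^ (b * a') = \<gamma> ^ ((b - n) * a')"
    using pow_add_mult_self[OF assms(2), of "(b - n) * a'" a'] overflow_y by (simp add: algebra_simps)
  moreover have "red n w (k + k') (a + a') (b + b')
      = (\<lambda>q. red n w (k + k') (a + a') (b - n + b') q - red n w (k + k' + int w) (a + a') (b - n + b') q)"
    using red_y_overflow[OF assms(1), of "b + b'" w "k + k'" "a + a'"] overflow_y
    by (simp add: algebra_simps)
  ultimately show ?case
    using overflow_y assms(1)
    by (simp add: red_y_overflow hmul_diff_left finite_fsupp_red algebra_simps)
next
  case (overflow_g k a b)
  then show ?case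
    using assms(1) red_g_overflow[OF assms(1), of "a + a'" w "k + k'" "b + b'"]
    by (simp add: red_g_overflow algebra_simps)
next
  case (reduced k a b)
  then show ?case
    using assms(1) by (simp add: red_reduced hmul_hbasis bmul_def)
qed

lemma hmul_red:
  assumes "0 < n" "(\<gamma>::'k::field) ^ n = 1"
  shows "hmul n w \<gamma> (red n w k a b) (red n w k' a' b')
           = (\<lambda>d. \<gamma> ^ (b * a') * red n w (k + k') (a + a') (b + b') d)"
  using assms(1)
proof (induction k' a' b' rule: red_induct)
  case (overflow_y k' a' b')
  have rhs: "red n w (k + k') (a + a') (b + b')
      = (\<lambda>q. red n w (k + k') (a + a') (b + (b' - n)) q - red n w (k + (k' + int w)) (a + a') (b + (b' - n)) q)"
    using red_y_overflow[OF assms(1), of "b + b'" w "k + k'" "a + a'"] overflow_y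
    by (simp add: algebra_simps)
  show ?case
    unfolding red_y_overflow[OF assms(1) \<open>n \<le> b'\<close>] rhs
      hmul_diff_right[OF finite_fsupp_red[OF assms(1)] finite_fsupp_red[OF assms(1)] finite_fsupp_red[OF assms(1)]]
      overflow_y.IH
    by (simp add: algebra_simps)
next
  case (overflow_g k' a' b')
  have gpow: "\<gamma> ^ (b * a') = \<gamma> ^ (b * (a' - n))"
    using pow_add_mult_self[OF assms(2), of "b * (a' - n)" b] overflow_g by (simp add: algebra_simps)
  have rhs: "red n w (k + k') (a + a') (b + b') = red n w (k + (k' + int w)) (a + (a' - n)) (b + b')"
    using red_g_overflow[OF assms(1), of "a + a'" w "k + k'" "b + b'"] overflow_g
    by (simp add: algebra_simps)
  show ?case
    unfolding red_g_overflow[OF assms(1) \<open>n \<le> a'\<close>] overflow_g.IH gpow rhs ..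
next
  case (reduced k' a' b')
  then show ?case
    using assms by (simp add: red_reduced hmul_red_hbasis)
qed

lemma xH_eq_red: "0 < n \<Longrightarrow> xH = red n w 1 0 0"
  by (simp add: xH_def red_reduced)

lemma xinvH_eq_red: "0 < n \<Longrightarrow> xinvH = red n w (- 1) 0 0"
  by (simp add: xinvH_def red_reduced)

lemma hone_eq_red: "0 < n \<Longrightarrow> hone = red n w 0 0 0"
  by (simp add: hone_def red_reduced)

lemma hpow_red:
  assumes "0 < n" "(\<gamma>::'k::field) ^ n = 1"
  shows "hpow n w \<gamma> (red n w k a 0) m = red n w (int m * k) (m * a) 0"
proof (induction m)
  case 0
  then show ?case by (simp add: hpow_def hone_eq_red[OF assms(1)])
next
  case (Suc m)
  then show ?case
    using hmul_red[OF assms] by (simp add: hpow_def algebra_simps)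
qed

lemma hzpow_xH:
  assumes "0 < n" "(\<gamma>::'k::field) ^ n = 1"
  shows "hzpow n w \<gamma> xH xinvH r = red n w r 0 0"
  using hpow_red[OF assms, of w 1 0 "nat r"] hpow_red[OF assms, of w "- 1" 0 "nat (- r)"]
  by (simp add: hzpow_def xH_eq_red[OF assms(1), of w] xinvH_eq_red[OF assms(1), of w])

lemma hzpow_xinvH:
  assumes "0 < n" "(\<gamma>::'k::field) ^ n = 1"
  shows "hzpow n w \<gamma> xinvH xH r = red n w (- r) 0 0"
  using hpow_red[OF assms, of w 1 0 "nat (- r)"] hpow_red[OF assms, of w "- 1" 0 "nat r"]
  by (simp add: hzpow_def xH_eq_red[OF assms(1), of w] xinvH_eq_red[OF assms(1), of w])

text \<open>Since g^-1 = x^-w g^(n-1), the normal form of g^i is x^(gpow_xexp w i) g^(gpow_gexp n i).\<close>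

definition gpow_xexp :: "nat \<Rightarrow> int \<Rightarrow> int" where
  "gpow_xexp w i = (if 0 \<le> i then 0 else int w * i)"

definition gpow_gexp :: "nat \<Rightarrow> int \<Rightarrow> nat" where
  "gpow_gexp n i = (if 0 \<le> i then nat i else (n - 1) * nat (- i))"

lemma hzpow_gH:
  assumes "0 < n" "(\<gamma>::'k::field) ^ n = 1"
  shows "hzpow n w \<gamma> (gH n w) (ginvH n w) i = red n w (gpow_xexp w i) (gpow_gexp n i) 0"
  using assms by (simp add: hzpow_def gH_def ginvH_def gpow_xexp_def gpow_gexp_def hpow_red algebra_simps)

lemma xgH_eq_red:
  assumes "0 < n" "(\<gamma>::'k::field) ^ n = 1"
  shows "xgH n w \<gamma> r i = red n w (r + gpow_xexp w i) (gpow_gexp n i) 0"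
  by (simp add: xgH_def hzpow_xH[OF assms] hzpow_gH[OF assms] hmul_red[OF assms])

lemma antipode_hbasis: "antipode n w \<gamma> (hbasis p) = S_basis n w \<gamma> p"
  by (rule ext) (simp only: antipode_def fsupp_hbasis, simp add: hbasis_def)

lemma S_basis_x:
  assumes "0 < n" "(\<gamma>::'k::field) ^ n = 1"
  shows "S_basis n w \<gamma> (k, 0, 0) = red n w (- k) 0 0"
  by (simp add: S_basis_def hpow_def hzpow_xinvH[OF assms] hone_eq_red[OF assms(1), of w] hmul_red[OF assms])

lemma S_basis_g:
  assumes "0 < n" "(\<gamma>::'k::field) ^ n = 1"
  shows "S_basis n w \<gamma> (0, 1, 0) = red n w (- int w) (n - 1) 0"
  using hpow_red[OF assms, of w "- int w" "n - 1" 1]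
  by (simp add: S_basis_def hpow_def ginvH_def hzpow_xinvH[OF assms] hone_eq_red[OF assms(1), of w]
      hmul_red[OF assms])

lemma S_basis_y:
  assumes "0 < n" "(\<gamma>::'k::field) ^ n = 1"
  shows "S_basis n w \<gamma> (0, 0, 1) = (\<lambda>d. - (\<gamma> ^ (n - 1)) * red n w (- int w) (n - 1) 1 d)"
proof -
  let ?Sy = "\<lambda>d. - (\<gamma> ^ (n - 1)) * red n w (- int w) (n - 1) 1 d"
  have "(\<lambda>d. - hmul n w \<gamma> (yH n w) (ginvH n w) d) = ?Sy"
    by (simp add: yH_def ginvH_def hmul_red[OF assms])
  moreover have "hmul n w \<gamma> ?Sy hone = ?Sy"
    unfolding hone_eq_red[OF assms(1), of w]
      hmul_smult_left[OF finite_fsupp_red[OF assms(1)] finite_fsupp_red[OF assms(1)]] hmul_red[OF assms]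
    by simp
  moreover have "hzpow n w \<gamma> xinvH xH 0 = hone"
    by (simp add: hzpow_xinvH[OF assms] hone_eq_red[OF assms(1), of w])
  ultimately show ?thesis
    by (simp add: S_basis_def hpow_def)
qed

lemma antipode_gH:
  assumes "0 < n" "(\<gamma>::'k::field) ^ n = 1"
  shows "antipode n w \<gamma> (gH n w) = red n w (- int w) (n - 1) 0"
proof (cases "n = 1")
  case True
  then have "gH n w = (hbasis (int w, 0, 0) :: 'k helt)"
    using assms(1) by (simp add: gH_def red_g_overflow red_reduced)
  moreover have "n - 1 = 0"
    using True by simp
  ultimately show ?thesis
    by (simp add: antipode_hbasis S_basis_x[OF assms])
next
  case False
  then have "gH n w = (hbasis (0, 1, 0) :: 'k helt)"
    using assms(1) by (simp add: gH_def red_reduced)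
  then show ?thesis
    by (simp only: antipode_hbasis S_basis_g[OF assms])
qed

text \<open>For n = 1 the relation y^n = 1 - x^w makes y = 1 - x^w, which is not a basis monomial.\<close>

lemma antipode_yH:
  assumes "0 < n" "(\<gamma>::'k::field) ^ n = 1" "0 < w"
  shows "antipode n w \<gamma> (yH n w) = (\<lambda>d. - (\<gamma> ^ (n - 1)) * red n w (- int w) (n - 1) 1 d)"
proof (cases "n = 1")
  case True
  have y: "yH n w = (\<lambda>q. (hbasis (0, 0, 0) :: 'k helt) q - hbasis (int w, 0, 0) q)"
    using True by (simp add: yH_def red_y_overflow red_reduced)
  have n1: "n - 1 = 0"
    using True by simp
  have red_1: "red n w (- int w) 0 1 = (\<lambda>q. red n w (- int w) 0 0 q - red n w 0 0 0 q :: 'k)"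
    using True red_y_overflow[OF assms(1), of 1 w "- int w" 0] by simp
  have supp: "fsupp (yH n w :: 'k helt) \<subseteq> {(0, 0, 0), (int w, 0, 0)}"
    unfolding y by (auto simp: fsupp_def hbasis_def)
  show ?thesis
  proof
    fix d
    have "antipode n w \<gamma> (yH n w) d = (\<Sum>p\<in>{(0, 0, 0), (int w, 0, 0)}. yH n w p * S_basis n w \<gamma> p d)"
      unfolding antipode_def by (rule sum.mono_neutral_left) (use supp in \<open>auto simp: fsupp_def\<close>)
    also have "\<dots> = S_basis n w \<gamma> (0, 0, 0) d - S_basis n w \<gamma> (int w, 0, 0) d"
      using assms(3) by (simp add: y hbasis_def)
    also have "\<dots> = - (\<gamma> ^ (n - 1)) * red n w (- int w) (n - 1) 1 d"
      unfolding S_basis_x[OF assms(1,2)] n1 red_1 by simp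
    finally show "antipode n w \<gamma> (yH n w) d = - (\<gamma> ^ (n - 1)) * red n w (- int w) (n - 1) 1 d" .
  qed
next
  case False
  then have "yH n w = (hbasis (0, 0, 1) :: 'k helt)"
    using assms(1) by (simp add: yH_def red_reduced)
  then show ?thesis
    by (simp only: antipode_hbasis S_basis_y[OF assms(1,2)])
qed

section \<open>The iterated coproduct of y\<close>

definition tbasis :: "idx \<Rightarrow> idx \<Rightarrow> 'k::field telt" where
  "tbasis p q = tens (hbasis p) (hbasis q)"

lemma tbasis_apply: "tbasis p q (x1, x2) = (if x1 = p \<and> x2 = q then 1 else 0)"
  by (simp add: tbasis_def tens_def hbasis_def)

lemma fsupp_tbasis [simp]: "fsupp (tbasis p q :: 'k::field telt) = {(p, q)}"
  by (auto simp: fsupp_def tbasis_apply split: if_splits)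

lemma finite_fsupp_tbasis: "finite (fsupp (tbasis p q :: 'k::field telt))"
  by simp

lemma tmul_expand:
  assumes "finite A" "fsupp F \<subseteq> A" "finite B" "fsupp G \<subseteq> B"
  shows "tmul n w \<gamma> F G (d1, d2)
           = (\<Sum>P\<in>A. \<Sum>Q\<in>B. F P * G Q * bmul n w \<gamma> (fst P) (fst Q) d1 * bmul n w \<gamma> (snd P) (snd Q) d2)"
proof -
  have "tmul n w \<gamma> F G (d1, d2)
      = (\<Sum>P\<in>A. \<Sum>Q\<in>fsupp G. F P * G Q * bmul n w \<gamma> (fst P) (fst Q) d1 * bmul n w \<gamma> (snd P) (snd Q) d2)"
    unfolding tmul_def prod.case by (rule sum.mono_neutral_left) (use assms in \<open>auto simp: fsupp_def\<close>)
  also have "\<dots> = (\<Sum>P\<in>A. \<Sum>Q\<in>B. F P * G Q * bmul n w \<gamma> (fst P) (fst Q) d1 * bmul n w \<gamma> (snd P) (snd Q) d2)"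
    by (rule sum.cong[OF refl], rule sum.mono_neutral_left) (use assms in \<open>auto simp: fsupp_def\<close>)
  finally show ?thesis .
qed

lemma tmul_add_left:
  assumes "finite (fsupp F)" "finite (fsupp F')" "finite (fsupp G)"
  shows "tmul n w \<gamma> (\<lambda>x. F x + F' x) G = (\<lambda>x. tmul n w \<gamma> F G x + tmul n w \<gamma> F' G x)"
proof
  fix x :: "idx \<times> idx"
  show "tmul n w \<gamma> (\<lambda>x. F x + F' x) G x = tmul n w \<gamma> F G x + tmul n w \<gamma> F' G x"
    using assms fsupp_add_subset[of F F']
    by (cases x) (simp add: tmul_expand[of "fsupp F \<union> fsupp F'" _ "fsupp G"] sum.distrib[symmetric]
        algebra_simps)
qed

lemma tmul_add_right:
  assumes "finite (fsupp F)" "finite (fsupp G)" "finite (fsupp G')"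
  shows "tmul n w \<gamma> F (\<lambda>x. G x + G' x) = (\<lambda>x. tmul n w \<gamma> F G x + tmul n w \<gamma> F G' x)"
proof
  fix x :: "idx \<times> idx"
  show "tmul n w \<gamma> F (\<lambda>x. G x + G' x) x = tmul n w \<gamma> F G x + tmul n w \<gamma> F G' x"
    using assms fsupp_add_subset[of G G']
    by (cases x) (simp add: tmul_expand[of "fsupp F" _ "fsupp G \<union> fsupp G'"] sum.distrib[symmetric]
        algebra_simps)
qed

lemma tmul_tbasis: "tmul n w \<gamma> (tbasis p q) (tbasis p' q') = tens (bmul n w \<gamma> p p') (bmul n w \<gamma> q q')"
proof
  fix x :: "idx \<times> idx"
  show "tmul n w \<gamma> (tbasis p q) (tbasis p' q') x = tens (bmul n w \<gamma> p p') (bmul n w \<gamma> q q') x"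
    by (cases x) (simp only: tmul_def fsupp_tbasis, simp add: tbasis_apply tens_def)
qed

lemma Delta_hbasis: "Delta n w \<gamma> (hbasis p) = Delta_basis n w \<gamma> p"
  by (rule ext) (simp only: Delta_def fsupp_hbasis, simp add: hbasis_def)

text \<open>For n \<ge> 2 the elements 1, g and y are themselves basis monomials.\<close>

context
  fixes n w :: nat
  assumes n_ge_2: "2 \<le> n"
begin

abbreviation "e1 \<equiv> (0::int, 0::nat, 0::nat)"
abbreviation "eg \<equiv> (0::int, 1::nat, 0::nat)"
abbreviation "ey \<equiv> (0::int, 0::nat, 1::nat)"

lemma bmul_e1_left: "valid_idx n q \<Longrightarrow> bmul n w \<gamma> e1 q = hbasis q"
  using n_ge_2 by (cases q) (simp add: bmul_def red_reduced valid_idx_def)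

lemma bmul_e1_right: "valid_idx n q \<Longrightarrow> bmul n w \<gamma> q e1 = hbasis q"
  using n_ge_2 by (cases q) (simp add: bmul_def red_reduced valid_idx_def)

lemma valid_idx_e1_eg_ey: "valid_idx n e1" "valid_idx n eg" "valid_idx n ey"
  using n_ge_2 by (simp_all add: valid_idx_def)

lemma yH_eq_hbasis: "yH n w = (hbasis ey :: 'k::field helt)"
  using n_ge_2 by (simp add: yH_def red_reduced)

lemma gH_eq_hbasis: "gH n w = (hbasis eg :: 'k::field helt)"
  using n_ge_2 by (simp add: gH_def red_reduced)

lemma Delta_basis_y:
  "Delta_basis n w \<gamma> ey = (\<lambda>pq. tbasis ey eg pq + tbasis e1 ey pq :: 'k::field)"
proof -
  let ?Y = "\<lambda>pq. tbasis ey eg pq + tbasis e1 ey pq :: 'k"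
  have "Delta_basis n w \<gamma> ey
      = tmul n w \<gamma> (tmul n w \<gamma> (tbasis e1 e1) (tbasis e1 e1)) (tmul n w \<gamma> ?Y (tbasis e1 e1))"
    by (simp add: Delta_basis_def tzpow_def tpow_def hone_def tbasis_def yH_eq_hbasis gH_eq_hbasis)
  also have "\<dots> = ?Y"
    by (simp only: tmul_add_left[OF finite_fsupp_tbasis finite_fsupp_tbasis finite_fsupp_tbasis]
        tmul_add_right[OF finite_fsupp_tbasis finite_fsupp_tbasis finite_fsupp_tbasis]
        tbasis_def[symmetric] tmul_tbasis bmul_e1_left bmul_e1_right valid_idx_e1_eg_ey)
  finally show ?thesis .
qed

lemma Delta_basis_1: "Delta_basis n w \<gamma> e1 = (tbasis e1 e1 :: 'k::field telt)"
proof -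
  have "Delta_basis n w \<gamma> e1 = tmul n w \<gamma> (tmul n w \<gamma> (tbasis e1 e1) (tbasis e1 e1)) (tbasis e1 e1)"
    by (simp add: Delta_basis_def tzpow_def tpow_def hone_def tbasis_def)
  then show ?thesis
    by (simp only: tbasis_def[symmetric] tmul_tbasis bmul_e1_left valid_idx_e1_eg_ey)
qed

lemma Delta3_yH:
  "Delta3 n w \<gamma> (yH n w)
     = (\<lambda>t. if t = (ey, eg, eg) \<or> t = (e1, ey, eg) \<or> t = (e1, e1, ey) then 1 else 0 :: 'k::field)"
proof
  fix t :: "idx \<times> idx \<times> idx"
  obtain b1 b2 b3 where t: "t = (b1, b2, b3)"
    by (cases t)
  have supp: "fsupp (Delta_basis n w \<gamma> ey :: 'k telt) = {(ey, eg), (e1, ey)}"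
    unfolding Delta_basis_y by (auto simp: fsupp_def tbasis_apply split: if_splits)
  have "Delta3 n w \<gamma> (yH n w) t
      = (\<Sum>q\<in>{(ey, eg), (e1, ey)}. if snd q = b3 then Delta_basis n w \<gamma> ey q * Delta_basis n w \<gamma> (fst q) (b1, b2) else 0)"
    unfolding t Delta3_def yH_eq_hbasis Delta_hbasis supp by simp
  also have "\<dots> = (if t = (ey, eg, eg) \<or> t = (e1, ey, eg) \<or> t = (e1, e1, ey) then 1 else 0)"
    unfolding t
    by (auto simp: Delta_basis_y Delta_basis_y[unfolded One_nat_def] Delta_basis_1 tbasis_apply)
  finally show "Delta3 n w \<gamma> (yH n w) t = (if t = (ey, eg, eg) \<or> t = (e1, ey, eg) \<or> t = (e1, e1, ey) then 1 else 0)" .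
qed

lemma fsupp_Delta3_yH: "fsupp (Delta3 n w \<gamma> (yH n w) :: 'k::field t3elt) = {(ey, eg, eg), (e1, ey, eg), (e1, e1, ey)}"
  unfolding Delta3_yH by (auto simp: fsupp_def)

end

section \<open>Closed form of the elements c(k,l)\<close>

locale cc_context =
  fixes n w :: nat and \<gamma> \<beta> :: "'k::field" and r i :: int
  assumes n_pos: "0 < n" and w_pos: "0 < w" and root: "\<gamma> ^ n = 1"
begin

text \<open>Since gamma^n = 1, Q = gamma^-1 and T = gamma^i.\<close>

abbreviation Q :: 'k where "Q \<equiv> \<gamma> ^ (n - 1)"
abbreviation T :: 'k where "T \<equiv> \<gamma> ^ gpow_gexp n i"

lemma gamma_mult_Q: "\<gamma> * Q = 1"
  using root n_pos by (metis power_Suc Suc_diff_1)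

lemma gamma_pow_mult_Q_pow: "\<gamma> ^ l * Q ^ l = 1"
  by (metis gamma_mult_Q power_mult_distrib power_one)

lemma inverse_gamma_pow: "inverse (\<gamma> ^ l) = Q ^ l"
  using gamma_pow_mult_Q_pow[of l] by (metis inverse_unique)

lemma Q_neq_0: "Q \<noteq> 0"
  using gamma_mult_Q by auto

lemma gamma_neq_0: "\<gamma> \<noteq> 0"
  using gamma_mult_Q by auto

lemma Q_eq_inverse: "Q = inverse \<gamma>"
  using gamma_mult_Q by (metis inverse_unique)

lemma T_eq_powi: "T = \<gamma> powi i"
proof (cases "0 \<le> i")
  case True
  then show ?thesis
    by (simp add: gpow_gexp_def power_int_nonneg_exp)
next
  case False
  then have "T = Q ^ nat (- i)"
    by (simp add: gpow_gexp_def power_mult)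
  then show ?thesis
    unfolding Q_eq_inverse using False by (simp add: power_int_def power_inverse)
qed

lemma Q_pow_eq_powi: "Q ^ s = \<gamma> powi (- int s)"
  unfolding Q_eq_inverse by (simp add: power_int_minus power_inverse)

lemma gamma_pow_mult_n_minus_1: "\<gamma> ^ (b * (n - 1)) = Q ^ b"
  by (metis mult.commute power_mult)

text \<open>The normal form of x^r g^(i-k) y^b.\<close>

definition cc_monomial :: "nat \<Rightarrow> nat \<Rightarrow> 'k helt" where
  "cc_monomial k b = red n w (r + gpow_xexp w i - int w * int k) (gpow_gexp n i + (n - 1) * k) b"

lemma finite_fsupp_cc_monomial: "finite (fsupp (cc_monomial k b))"
  unfolding cc_monomial_def by (rule finite_fsupp_red[OF n_pos])

lemma cc_monomial_neq_hzero: "cc_monomial k b \<noteq> hzero"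
  unfolding cc_monomial_def by (rule red_neq_hzero[OF n_pos w_pos])

lemma red_eq_cc_monomial_Suc:
  "red n w (r + gpow_xexp w i - int w * int k + - int w) (gpow_gexp n i + (n - 1) * k + (n - 1)) b
     = cc_monomial (Suc k) b"
proof -
  have "r + gpow_xexp w i - int w * int k + - int w = r + gpow_xexp w i - int w * int (Suc k)"
    by (simp add: algebra_simps)
  moreover have "gpow_gexp n i + (n - 1) * k + (n - 1) = gpow_gexp n i + (n - 1) * Suc k"
    by simp
  ultimately show ?thesis
    unfolding cc_monomial_def by (simp only:)
qed

lemma antipode_yH_eq_Q: "antipode n w \<gamma> (yH n w) = (\<lambda>d. (- Q) * red n w (- int w) (n - 1) 1 d)"
  using antipode_yH[OF n_pos root w_pos] by simp

lemma cc_monomial_mult_antipode_yH: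
  "hmul n w \<gamma> (\<lambda>d. c * cc_monomial k b d) (antipode n w \<gamma> (yH n w))
     = (\<lambda>d. c * (- Q) * Q ^ b * cc_monomial (Suc k) (Suc b) d)"
  unfolding antipode_yH_eq_Q
    hmul_smult_left[OF finite_fsupp_cc_monomial finite_fsupp_smult[OF finite_fsupp_red[OF n_pos]]]
    hmul_smult_right[OF finite_fsupp_cc_monomial finite_fsupp_red[OF n_pos]]
  unfolding cc_monomial_def hmul_red[OF n_pos root] gamma_pow_mult_n_minus_1
  using red_eq_cc_monomial_Suc[of k "Suc b"] by (simp add: cc_monomial_def mult_ac)

lemma cc_monomial_mult_antipode_gH:
  "hmul n w \<gamma> (\<lambda>d. c * cc_monomial k b d) (antipode n w \<gamma> (gH n w))
     = (\<lambda>d. c * Q ^ b * cc_monomial (Suc k) b d)"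
  unfolding antipode_gH[OF n_pos root] hmul_smult_left[OF finite_fsupp_cc_monomial finite_fsupp_red[OF n_pos]]
  unfolding cc_monomial_def hmul_red[OF n_pos root] gamma_pow_mult_n_minus_1
  using red_eq_cc_monomial_Suc[of k b] by (simp add: cc_monomial_def mult_ac)

lemma yH_cc_monomial_mult_antipode_gH:
  "hmul n w \<gamma> (hmul n w \<gamma> (yH n w) (\<lambda>d. c * cc_monomial k b d)) (antipode n w \<gamma> (gH n w))
     = (\<lambda>d. c * T * Q ^ k * Q ^ Suc b * cc_monomial (Suc k) (Suc b) d)"
proof -
  have "\<gamma> ^ (1 * (gpow_gexp n i + (n - 1) * k)) = T * Q ^ k"
    by (simp add: power_add power_mult)
  then have y_mult: "hmul n w \<gamma> (yH n w) (\<lambda>d. c * cc_monomial k b d)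
      = (\<lambda>d. (c * T * Q ^ k) * red n w (r + gpow_xexp w i - int w * int k) (gpow_gexp n i + (n - 1) * k) (Suc b) d)"
    unfolding yH_def hmul_smult_right[OF finite_fsupp_red[OF n_pos] finite_fsupp_cc_monomial]
    unfolding cc_monomial_def hmul_red[OF n_pos root] by (simp add: mult_ac)
  show ?thesis
    unfolding y_mult antipode_gH[OF n_pos root]
      hmul_smult_left[OF finite_fsupp_red[OF n_pos] finite_fsupp_red[OF n_pos]]
      hmul_red[OF n_pos root] gamma_pow_mult_n_minus_1
    using red_eq_cc_monomial_Suc[of k "Suc b"] by (simp add: mult_ac)
qed

lemma cc_Suc:
  "cc n w \<gamma> \<beta> r i (Suc k) l =
     (if l = 0 then
        hadd (hmul n w \<gamma> (cc n w \<gamma> \<beta> r i k 0) (antipode n w \<gamma> (yH n w)))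
             (hsmult \<beta> (hmul n w \<gamma> (hmul n w \<gamma> (yH n w) (cc n w \<gamma> \<beta> r i k 0)) (antipode n w \<gamma> (gH n w))))
      else if l < Suc k then
        hadd (hadd (hmul n w \<gamma> (cc n w \<gamma> \<beta> r i k l) (antipode n w \<gamma> (yH n w)))
                   (hsmult (\<beta> * Q ^ l)
                      (hmul n w \<gamma> (hmul n w \<gamma> (yH n w) (cc n w \<gamma> \<beta> r i k l)) (antipode n w \<gamma> (gH n w)))))
             (hmul n w \<gamma> (cc n w \<gamma> \<beta> r i k (l - 1)) (antipode n w \<gamma> (gH n w)))
      else if l = Suc k then hmul n w \<gamma> (cc n w \<gamma> \<beta> r i k k) (antipode n w \<gamma> (gH n w))
      else hzero)"
  by (simp only: cc.simps Let_def inverse_gamma_pow)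

theorem cc_eq_cc_coeff:
  "cc n w \<gamma> \<beta> r i k l
     = (if l \<le> k then (\<lambda>d. cc_coeff Q (\<beta> * T) k l * cc_monomial k (k - l) d) else hzero)"
proof (induction k arbitrary: l)
  case 0
  have "xgH n w \<gamma> r i = cc_monomial 0 0"
    unfolding xgH_eq_red[OF n_pos root] cc_monomial_def by simp
  then show ?case
    by (simp add: cc_coeff_self)
next
  case (Suc k)
  consider "l = 0" | "0 < l" "l \<le> k" | "l = Suc k" | "Suc k < l"
    by linarith
  then show ?case
  proof cases
    case 1
    then have "cc n w \<gamma> \<beta> r i (Suc k) l
        = (\<lambda>d. cc_coeff Q (\<beta> * T) k 0 * (- Q) * Q ^ k * cc_monomial (Suc k) (Suc k) d
              + \<beta> * (cc_coeff Q (\<beta> * T) k 0 * T * Q ^ k * Q ^ Suc k * cc_monomial (Suc k) (Suc k) d))"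
      unfolding cc_Suc
      by (simp add: Suc.IH cc_monomial_mult_antipode_yH yH_cc_monomial_mult_antipode_gH hadd_def hsmult_def)
    then show ?thesis
      using 1 by (simp add: cc_coeff_Suc_0 algebra_simps)
  next
    case 2
    then have k_l: "k - (l - 1) = Suc (k - l)" "Suc k - l = Suc (k - l)" "l - 1 \<le> k"
      by auto
    have "cc n w \<gamma> \<beta> r i (Suc k) l
        = (\<lambda>d. cc_coeff Q (\<beta> * T) k l * (- Q) * Q ^ (k - l) * cc_monomial (Suc k) (Suc (k - l)) d
              + \<beta> * Q ^ l * (cc_coeff Q (\<beta> * T) k l * T * Q ^ k * Q ^ Suc (k - l)
                  * cc_monomial (Suc k) (Suc (k - l)) d)
              + cc_coeff Q (\<beta> * T) k (l - 1) * Q ^ Suc (k - l) * cc_monomial (Suc k) (Suc (k - l)) d)"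
      using 2 k_l unfolding cc_Suc
      by (simp add: Suc.IH cc_monomial_mult_antipode_yH yH_cc_monomial_mult_antipode_gH
          cc_monomial_mult_antipode_gH hadd_def hsmult_def)
    then show ?thesis
      using 2 k_l by (simp add: cc_coeff_Suc power_add algebra_simps)
  next
    case 3
    then show ?thesis
      using cc_monomial_mult_antipode_gH[of 1 k 0] unfolding cc_Suc by (simp add: Suc.IH cc_coeff_self)
  next
    case 4
    then show ?thesis
      unfolding cc_Suc by simp
  qed
qed

lemma in_H_cc: "in_H n (cc n w \<gamma> \<beta> r i k l)"
proof (cases "l \<le> k")
  case True
  have "finite (fsupp (\<lambda>d. cc_coeff Q (\<beta> * T) k l * cc_monomial k (k - l) d))"
    by (rule finite_fsupp_smult[OF finite_fsupp_cc_monomial])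
  moreover have "in_H n (cc_monomial k (k - l))"
    unfolding cc_monomial_def by (rule in_H_red[OF n_pos])
  ultimately show ?thesis
    using True by (auto simp: cc_eq_cc_coeff in_H_def fsupp_def)
next
  case False
  then show ?thesis
    by (simp add: cc_eq_cc_coeff in_H_def hzero_def fsupp_def)
qed

lemma cc_Suc_apply:
  assumes "l \<le> Suc k"
  shows "cc n w \<gamma> \<beta> r i (Suc k) l d =
     (if l \<le> k then hmul n w \<gamma> (cc n w \<gamma> \<beta> r i k l) (antipode n w \<gamma> (yH n w)) d
        + \<beta> * Q ^ l * hmul n w \<gamma> (hmul n w \<gamma> (yH n w) (cc n w \<gamma> \<beta> r i k l)) (antipode n w \<gamma> (gH n w)) d
      else 0)
     + (if l = 0 then 0 else hmul n w \<gamma> (cc n w \<gamma> \<beta> r i k (l - 1)) (antipode n w \<gamma> (gH n w)) d)"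
  using assms unfolding cc_Suc by (auto simp: hadd_def hsmult_def)

lemma cc_eq_hzero_iff: "l \<le> k \<Longrightarrow> cc n w \<gamma> \<beta> r i k l = hzero \<longleftrightarrow> cc_coeff Q (\<beta> * T) k l = 0"
  using cc_monomial_neq_hzero[of k "k - l"] by (auto simp: cc_eq_cc_coeff hzero_def fun_eq_iff)

lemma beta_T_Q_pow_neq_1:
  assumes "\<beta> ^ n \<noteq> 1"
  shows "\<beta> * T * Q ^ s \<noteq> 1"
proof
  assume "\<beta> * T * Q ^ s = 1"
  have "(\<beta> * T * Q ^ s) ^ n = \<beta> ^ n * T ^ n * (Q ^ s) ^ n"
    by (simp only: power_mult_distrib)
  also have "T ^ n = 1"
    by (metis root power_mult mult.commute power_one)
  also have "(Q ^ s) ^ n = 1"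
    by (metis root power_mult mult.commute power_one)
  finally have "(\<beta> * T * Q ^ s) ^ n = \<beta> ^ n"
    by simp
  with \<open>\<beta> * T * Q ^ s = 1\<close> assms show False
    by simp
qed

lemma cc_self_neq_hzero: "cc n w \<gamma> \<beta> r i k k \<noteq> hzero"
  using cc_eq_hzero_iff[of k k] by (simp add: cc_coeff_self)

lemma cc_0_neq_hzero: "(\<And>s. s < k \<Longrightarrow> \<beta> * T * Q ^ s \<noteq> 1) \<Longrightarrow> cc n w \<gamma> \<beta> r i k 0 \<noteq> hzero"
  using cc_eq_hzero_iff[of 0 k] cc_coeff_0_eq_0_iff[OF Q_neq_0] by auto

lemma cc_eq_hzero_if_root: "l \<le> s \<Longrightarrow> s < k \<Longrightarrow> \<beta> * T * Q ^ s = 1 \<Longrightarrow> cc n w \<gamma> \<beta> r i k l = hzero"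
  using cc_eq_hzero_iff[of l k] cc_coeff_eq_0_if_root[of l s k] by simp

end

section \<open>Vanishing of the elements c(k,l)\<close>

locale cc_primitive_context = cc_context +
  assumes primitive: "primitive_root n \<gamma>"
begin

lemma Q_pow_inj: "b < n \<Longrightarrow> b' < n \<Longrightarrow> Q ^ b = Q ^ b' \<Longrightarrow> b = b'"
proof -
  assume "b < n" "b' < n" "Q ^ b = Q ^ b'"
  then have "inverse (\<gamma> ^ b) = inverse (\<gamma> ^ b')"
    by (simp only: inverse_gamma_pow)
  then show "b = b'"
    using primitive_root_pow_inj[OF primitive \<open>b < n\<close> \<open>b' < n\<close>] by simp
qed

lemma beta_T_Q_pow_eq_1_iff:
  assumes "\<beta> = \<gamma> powi j" "s < n"
  shows "\<beta> * T * Q ^ s = 1 \<longleftrightarrow> s = nat ((i + j) mod int n)"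
proof -
  have powi_add: "\<gamma> powi (x + y) = \<gamma> powi x * \<gamma> powi y" for x y
    using gamma_neq_0 by (simp add: power_int_add)
  have "\<gamma> powi (j + i - int s) = \<gamma> powi j * \<gamma> powi i * \<gamma> powi (- int s)"
    by (simp only: diff_conv_add_uminus powi_add)
  then have "\<beta> * T * Q ^ s = \<gamma> powi (j + i - int s)"
    unfolding assms(1) T_eq_powi Q_pow_eq_powi by simp
  then have "\<beta> * T * Q ^ s = 1 \<longleftrightarrow> (j + i) mod int n = int s mod int n"
    using primitive_root_powi_eq_1_iff[OF primitive n_pos] by (simp add: mod_eq_dvd_iff)
  also have "\<dots> \<longleftrightarrow> s = nat ((i + j) mod int n)"
    using assms(2) n_pos by (auto simp: add.commute)
  finally show ?thesis .
qed

lemma cc_n_eq_hzero: "0 < l \<Longrightarrow> l < n \<Longrightarrow> cc n w \<gamma> \<beta> r i n l = hzero"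
proof -
  assume l: "0 < l" "l < n"
  have "Q ^ n = 1"
    by (metis root power_mult mult.commute power_one)
  moreover have "Q ^ l \<noteq> 1" if "0 < l" "l < n" for l
    using gamma_pow_mult_Q_pow[of l] primitive that by (auto simp: primitive_root_def)
  ultimately have "qbinom Q n l = 0"
    using qbinom_root_of_unity l by blast
  then show ?thesis
    using l cc_eq_hzero_iff[of l n] by (simp add: cc_coeff_def)
qed

lemma cc_vanishing_if_beta_pow_neq_1:
  assumes "\<beta> ^ n \<noteq> 1"
  shows "cc n w \<gamma> \<beta> r i k 0 \<noteq> hzero" and "0 < l \<Longrightarrow> l < n \<Longrightarrow> cc n w \<gamma> \<beta> r i n l = hzero"
  using cc_0_neq_hzero beta_T_Q_pow_neq_1[OF assms] cc_n_eq_hzero by blast+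

lemma cc_vanishing_if_beta_eq_powi:
  assumes "\<beta> = \<gamma> powi j" "P = nat ((i + j) mod int n)"
  shows "k \<le> P \<Longrightarrow> cc n w \<gamma> \<beta> r i k 0 \<noteq> hzero"
    and "l \<le> P \<Longrightarrow> cc n w \<gamma> \<beta> r i (P + 1) l = hzero"
proof -
  have "P < n"
    using assms(2) n_pos by (simp add: nat_less_iff)
  then have root_iff: "s \<le> P \<Longrightarrow> \<beta> * T * Q ^ s = 1 \<longleftrightarrow> s = P" for s
    using beta_T_Q_pow_eq_1_iff[OF assms(1)] assms(2) by simp
  show "k \<le> P \<Longrightarrow> cc n w \<gamma> \<beta> r i k 0 \<noteq> hzero"
    using root_iff by (intro cc_0_neq_hzero) auto
  show "l \<le> P \<Longrightarrow> cc n w \<gamma> \<beta> r i (P + 1) l = hzero"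
    using root_iff[of P] by (intro cc_eq_hzero_if_root[of l P]) auto
qed

end

section \<open>Standard elements of Yetter-Drinfeld modules\<close>

definition YD_submodule :: "nat \<Rightarrow> nat \<Rightarrow> 'k::field \<Rightarrow> ('k \<Rightarrow> 'v \<Rightarrow> 'v) \<Rightarrow>
    (idx \<Rightarrow> 'v \<Rightarrow> 'v::ab_group_add) \<Rightarrow> (idx \<Rightarrow> 'v \<Rightarrow> 'v) \<Rightarrow> 'v set \<Rightarrow> bool" where
  "YD_submodule n w \<gamma> sc \<rho> \<delta> W \<longleftrightarrow>
     module.subspace sc W \<and> (\<forall>f. in_H n f \<longrightarrow> (\<forall>u\<in>W. Hact sc \<rho> f u \<in> W)) \<and> (\<forall>p. \<forall>u\<in>W. \<delta> p u \<in> W)"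

lemma YD_simple_iff:
  "YD_simple n w \<gamma> sc \<rho> \<delta> \<longleftrightarrow>
     YD_module n w \<gamma> sc \<rho> \<delta> \<and> (\<forall>W. YD_submodule n w \<gamma> sc \<rho> \<delta> W \<longrightarrow> W = {0} \<or> W = UNIV)"
  by (simp add: YD_simple_def YD_submodule_def)

locale standard_YD = cc_primitive_context n w \<gamma> \<beta> r i
  for n w :: nat and \<gamma> \<beta> :: "'k::field" and r i :: int +
  fixes sc :: "'k \<Rightarrow> 'v::ab_group_add \<Rightarrow> 'v" and \<rho> \<delta> :: "idx \<Rightarrow> 'v \<Rightarrow> 'v" and v :: 'v and \<alpha> :: 'k
  assumes YD: "YD_module n w \<gamma> sc \<rho> \<delta>"
    and standard: "standard_elem n w \<gamma> sc \<rho> \<delta> v \<alpha> \<beta> (xgH n w \<gamma> r i)"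
begin

sublocale vs: vector_space sc
  using YD by (simp add: YD_module_def)

lemma rho_hom: "module_hom sc sc (\<rho> p)"
  using YD unfolding YD_module_def module_hom_iff_linear by blast

lemma delta_hom: "module_hom sc sc (\<delta> p)"
  using YD unfolding YD_module_def module_hom_iff_linear by blast

lemma Hact_hone: "Hact sc \<rho> hone x = x"
  using YD by (simp add: YD_module_def)

lemma Hact_hmul: "in_H n f \<Longrightarrow> in_H n g \<Longrightarrow> Hact sc \<rho> (hmul n w \<gamma> f g) x = Hact sc \<rho> f (Hact sc \<rho> g x)"
  using YD by (simp add: YD_module_def)

lemma finite_delta_supp: "finite {p. \<delta> p x \<noteq> 0}"
  using YD by (simp add: YD_module_def)

lemma delta_eq_0_if_invalid: "\<not> valid_idx n p \<Longrightarrow> \<delta> p x = 0"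
  using YD unfolding YD_module_def by blast

lemma delta_Hact:
  "in_H n f \<Longrightarrow> \<delta> d (Hact sc \<rho> f x) =
     (\<Sum>t\<in>fsupp (Delta3 n w \<gamma> f). \<Sum>c\<in>{c. \<delta> c x \<noteq> 0}.
        (case t of (b1, b2, b3) \<Rightarrow>
          sc (Delta3 n w \<gamma> f t * hmul n w \<gamma> (hmul n w \<gamma> (hbasis b1) (hbasis c)) (antipode n w \<gamma> (hbasis b3)) d)
             (\<rho> b2 (\<delta> c x))))"
  using YD unfolding YD_module_def by blast

lemma v_neq_0: "v \<noteq> 0"
  and alpha_neq_0: "\<alpha> \<noteq> 0"
  and beta_neq_0: "\<beta> \<noteq> 0"
  and Hact_xH_v: "Hact sc \<rho> xH v = sc \<alpha> v"
  and Hact_gH_v: "Hact sc \<rho> (gH n w) v = sc \<beta> v"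
  and delta_v: "\<delta> p v = sc (xgH n w \<gamma> r i p) v"
  using standard unfolding standard_elem_def by blast+

lemma Hact_eq_sum:
  assumes "finite A" "fsupp f \<subseteq> A"
  shows "Hact sc \<rho> f x = (\<Sum>p\<in>A. sc (f p) (\<rho> p x))"
  unfolding Hact_def by (rule sum.mono_neutral_left) (use assms in \<open>auto simp: fsupp_def\<close>)

lemma Hact_hbasis: "Hact sc \<rho> (hbasis p :: 'k helt) x = \<rho> p x"
  by (simp only: Hact_def fsupp_hbasis) (simp add: hbasis_def)

lemma Hact_hom: "module_hom sc sc (Hact sc \<rho> f)"
proof unfold_locales
  show "Hact sc \<rho> f (x + y) = Hact sc \<rho> f x + Hact sc \<rho> f y" for x y
    unfolding Hact_def by (simp add: module_hom.add[OF rho_hom] vs.scale_right_distrib sum.distrib)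
  show "Hact sc \<rho> f (sc c x) = sc c (Hact sc \<rho> f x)" for c x
    unfolding Hact_def by (simp add: module_hom.scale[OF rho_hom] vs.scale_sum_right mult.commute)
qed

lemma Hact_zero: "Hact sc \<rho> f 0 = 0"
  by (rule module_hom.zero[OF Hact_hom])

lemma Hact_scale: "Hact sc \<rho> f (sc c x) = sc c (Hact sc \<rho> f x)"
  by (rule module_hom.scale[OF Hact_hom])

lemma Hact_sum: "Hact sc \<rho> f (\<Sum>b\<in>A. h b) = (\<Sum>b\<in>A. Hact sc \<rho> f (h b))"
  by (rule module_hom.sum[OF Hact_hom])

lemma Hact_diff_left:
  assumes "finite (fsupp f)" "finite (fsupp g)"
  shows "Hact sc \<rho> (\<lambda>d. f d - g d) x = Hact sc \<rho> f x - Hact sc \<rho> g x"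
  using assms fsupp_diff_subset[of f g]
  by (simp add: Hact_eq_sum[of "fsupp f \<union> fsupp g"] vs.scale_left_diff_distrib sum_subtractf)

lemma Hact_smult_left:
  assumes "finite (fsupp f)"
  shows "Hact sc \<rho> (\<lambda>d. c * f d) x = sc c (Hact sc \<rho> f x)"
  using assms fsupp_smult_subset[of c f] by (simp add: Hact_eq_sum[of "fsupp f"] vs.scale_sum_right)

lemma Hact_red_Hact_red:
  "Hact sc \<rho> (red n w k a b) (Hact sc \<rho> (red n w k' a' b') x)
     = sc (\<gamma> ^ (b * a')) (Hact sc \<rho> (red n w (k + k') (a + a') (b + b')) x)"
  using Hact_hmul[OF in_H_red[OF n_pos, of w k a b] in_H_red[OF n_pos, of w k' a' b'], of x]
  unfolding hmul_red[OF n_pos root] by (simp add: Hact_smult_left[OF finite_fsupp_red[OF n_pos]])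

lemma Hact_red_0: "Hact sc \<rho> (red n w 0 0 0) x = x"
  using Hact_hone[of x] hone_eq_red[OF n_pos, of w, where 'a='k] by simp

lemma Hact_xpow_v: "\<exists>c. Hact sc \<rho> (red n w K 0 0) v = sc c v"
proof -
  have pos: "\<exists>c. Hact sc \<rho> (red n w (int m) 0 0) v = sc c v \<and> c \<noteq> 0" for m
  proof (induction m)
    case 0
    then show ?case
      using Hact_red_0 by (intro exI[of _ 1]) simp
  next
    case (Suc m)
    then obtain c where c: "Hact sc \<rho> (red n w (int m) 0 0) v = sc c v" "c \<noteq> 0"
      by blast
    have "Hact sc \<rho> (red n w (int (Suc m)) 0 0) v = Hact sc \<rho> (red n w 1 0 0) (Hact sc \<rho> (red n w (int m) 0 0) v)"
      using Hact_red_Hact_red[of 1 0 0 "int m" 0 0 v] by simp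
    also have "\<dots> = sc (c * \<alpha>) v"
      using c Hact_xH_v xH_eq_red[OF n_pos, of w, where 'a='k] by (simp add: Hact_scale mult.commute)
    finally show ?case
      using c alpha_neq_0 by (intro exI[of _ "c * \<alpha>"]) simp
  qed
  show ?thesis
  proof (cases "0 \<le> K")
    case True
    then show ?thesis
      using pos[of "nat K"] by auto
  next
    case False
    define m where "m = nat (- K)"
    then have K: "K = - int m"
      using False by simp
    obtain c where c: "Hact sc \<rho> (red n w (int m) 0 0) v = sc c v" "c \<noteq> 0"
      using pos by blast
    have "sc c (Hact sc \<rho> (red n w (- int m) 0 0) v) = v"
      using Hact_red_Hact_red[of "- int m" 0 0 "int m" 0 0 v] c Hact_red_0 by (simp add: Hact_scale)
    then have "Hact sc \<rho> (red n w (- int m) 0 0) v = sc (inverse c) v"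
      using c(2) by (metis vs.scale_scale left_inverse vs.scale_one)
    then show ?thesis
      unfolding K by blast
  qed
qed

lemma Hact_gpow_v: "Hact sc \<rho> (red n w 0 a 0) v = sc (\<beta> ^ a) v"
proof (induction a)
  case 0
  then show ?case using Hact_red_0 by simp
next
  case (Suc a)
  have "Hact sc \<rho> (red n w 0 1 0) (Hact sc \<rho> (red n w 0 a 0) v) = Hact sc \<rho> (red n w 0 (Suc a) 0) v"
    using Hact_red_Hact_red[of 0 1 0 0 a 0 v] by simp
  then show ?case
    using Suc Hact_gH_v by (simp add: Hact_scale gH_def algebra_simps)
qed

definition yv :: "nat \<Rightarrow> 'v" where
  "yv b = Hact sc \<rho> (red n w 0 0 b) v"

lemma yv_0: "yv 0 = v"
  by (simp add: yv_def Hact_red_0)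

lemma Hact_red_yv: "Hact sc \<rho> (red n w k a b) (yv b') = Hact sc \<rho> (red n w k a (b + b')) v"
  using Hact_red_Hact_red[of k a b 0 0 b' v] by (simp add: yv_def)

lemma Hact_yH_yv: "Hact sc \<rho> (yH n w) (yv b) = yv (Suc b)"
  using Hact_red_yv[of 0 0 1 b] by (simp add: yH_def yv_def)

lemma Hact_red_v_eq_scale_yv: "\<exists>c. Hact sc \<rho> (red n w k a b) v = sc c (yv b)"
proof -
  obtain c where c: "Hact sc \<rho> (red n w k 0 0) v = sc c v"
    using Hact_xpow_v by blast
  have "Hact sc \<rho> (red n w k a 0) v = sc (\<beta> ^ a * c) v"
    using Hact_red_Hact_red[of k 0 0 0 a 0 v] c Hact_gpow_v by (simp add: Hact_scale)
  then have "sc (\<gamma> ^ (b * a)) (Hact sc \<rho> (red n w k a b) v) = sc (\<beta> ^ a * c) (yv b)"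
    using Hact_red_Hact_red[of 0 0 b k a 0 v] by (simp add: Hact_scale yv_def)
  then have "Hact sc \<rho> (red n w k a b) v = sc (Q ^ (b * a) * (\<beta> ^ a * c)) (yv b)"
    using gamma_pow_mult_Q_pow[of "b * a"] by (metis vs.scale_scale vs.scale_one mult.commute)
  then show ?thesis
    by blast
qed

lemma Hact_gH_yv: "Hact sc \<rho> (gH n w) (yv b) = sc (\<beta> * Q ^ b) (yv b)"
proof -
  have "sc (\<gamma> ^ b) (Hact sc \<rho> (red n w 0 1 b) v) = sc \<beta> (yv b)"
    using Hact_red_Hact_red[of 0 0 b 0 1 0 v] Hact_gpow_v[of 1] by (simp add: Hact_scale yv_def)
  then have "Hact sc \<rho> (red n w 0 1 b) v = sc (\<beta> * Q ^ b) (yv b)"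
    using gamma_pow_mult_Q_pow[of b] by (metis vs.scale_scale vs.scale_one mult.commute)
  then show ?thesis
    using Hact_red_yv[of 0 1 0 b] by (simp add: gH_def)
qed

lemma yv_n: "yv n = sc (1 - \<beta> ^ n) v"
proof -
  have y_n: "red n w 0 0 n = (\<lambda>q. red n w 0 0 0 q - red n w (int w) 0 0 q :: 'k)"
    using red_y_overflow[OF n_pos, of n w 0 0] by simp
  have g_n: "red n w 0 n 0 = (red n w (int w) 0 0 :: 'k helt)"
    using red_g_overflow[OF n_pos, of n w 0 0] by simp
  have "yv n = v - Hact sc \<rho> (red n w 0 n 0) v"
    unfolding yv_def y_n Hact_diff_left[OF finite_fsupp_red[OF n_pos] finite_fsupp_red[OF n_pos]] g_n
    by (simp add: Hact_red_0)
  then show ?thesis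
    by (simp add: Hact_gpow_v vs.scale_left_diff_distrib)
qed

lemma yv_add_eq_0: "yv b = 0 \<Longrightarrow> yv (t + b) = 0"
  using Hact_red_yv[of 0 0 t b] Hact_zero by (simp add: yv_def)

lemma rho_yv: "valid_idx n p \<Longrightarrow> \<exists>c. \<rho> p (yv b) = sc c (yv (snd (snd p) + b))"
proof -
  assume "valid_idx n p"
  moreover obtain k a b' where p: "p = (k, a, b')"
    by (cases p)
  ultimately have red_p: "red n w k a b' = hbasis p"
    using n_pos by (simp add: red_reduced valid_idx_def)
  have "\<rho> p (yv b) = Hact sc \<rho> (red n w k a (b' + b)) v"
    unfolding Hact_red_yv[symmetric] red_p Hact_hbasis ..
  then show ?thesis
    using Hact_red_v_eq_scale_yv[of k a "b' + b"] p by auto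
qed

text \<open>The vectors y^b . v, b < n, are eigenvectors of g with pairwise distinct eigenvalues beta Q^b.\<close>

lemma yv_sum_eq_0_imp:
  "m \<le> n \<Longrightarrow> (\<forall>b<m. yv b \<noteq> 0) \<Longrightarrow> (\<Sum>b<m. sc (c b) (yv b)) = 0 \<Longrightarrow> \<forall>b<m. c b = 0"
proof (induction m arbitrary: c)
  case 0
  then show ?case by simp
next
  case (Suc m)
  have "(\<Sum>b<Suc m. sc (c b * (\<beta> * Q ^ b)) (yv b)) = Hact sc \<rho> (gH n w) (\<Sum>b<Suc m. sc (c b) (yv b))"
    by (simp only: Hact_sum Hact_scale Hact_gH_yv vs.scale_scale)
  moreover have "(\<Sum>b<Suc m. sc (c b * (\<beta> * Q ^ m)) (yv b)) = sc (\<beta> * Q ^ m) (\<Sum>b<Suc m. sc (c b) (yv b))"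
    by (simp only: vs.scale_sum_right vs.scale_scale mult.commute)
  ultimately have "(\<Sum>b<Suc m. sc (c b * (\<beta> * Q ^ b) - c b * (\<beta> * Q ^ m)) (yv b)) = 0"
    using Suc.prems(3) Hact_zero by (simp add: vs.scale_left_diff_distrib sum_subtractf)
  then have "(\<Sum>b<m. sc (c b * (\<beta> * Q ^ b) - c b * (\<beta> * Q ^ m)) (yv b)) = 0"
    by simp
  then have "\<forall>b<m. c b * (\<beta> * Q ^ b) - c b * (\<beta> * Q ^ m) = 0"
    using Suc.IH[of "\<lambda>b. c b * (\<beta> * Q ^ b) - c b * (\<beta> * Q ^ m)"] Suc.prems by simp
  moreover have "Q ^ b \<noteq> Q ^ m" if "b < m" for b
    using Q_pow_inj[of b m] that Suc.prems(1) by auto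
  ultimately have below: "\<forall>b<m. c b = 0"
    using beta_neq_0 by (auto simp: algebra_simps)
  then have "sc (c m) (yv m) = 0"
    using Suc.prems(3) by simp
  then have "c m = 0"
    using Suc.prems(2) by simp
  with below show ?case
    by (simp add: less_Suc_eq)
qed

lemma inj_on_yv: "m \<le> n \<Longrightarrow> (\<forall>b<m. yv b \<noteq> 0) \<Longrightarrow> inj_on yv {..<m}"
proof (rule inj_onI)
  fix b b'
  assume m: "m \<le> n" "\<forall>b<m. yv b \<noteq> 0" and bb: "b \<in> {..<m}" "b' \<in> {..<m}" "yv b = yv b'"
  have "sc (\<beta> * Q ^ b) (yv b) = Hact sc \<rho> (gH n w) (yv b)"
    by (simp only: Hact_gH_yv)
  also have "\<dots> = Hact sc \<rho> (gH n w) (yv b')"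
    using bb by simp
  also have "\<dots> = sc (\<beta> * Q ^ b') (yv b')"
    by (simp only: Hact_gH_yv)
  also have "\<dots> = sc (\<beta> * Q ^ b') (yv b)"
    using bb by simp
  finally have "sc (\<beta> * Q ^ b) (yv b) = sc (\<beta> * Q ^ b') (yv b)" .
  moreover have "yv b \<noteq> 0"
    using m bb by auto
  ultimately have "\<beta> * Q ^ b = \<beta> * Q ^ b'"
    by (metis vs.scale_cancel_right)
  then show "b = b'"
    using Q_pow_inj[of b b'] beta_neq_0 m bb by auto
qed

lemma independent_yv: "m \<le> n \<Longrightarrow> (\<forall>b<m. yv b \<noteq> 0) \<Longrightarrow> vs.independent (yv ` {..<m})"
proof -
  assume m: "m \<le> n" "\<forall>b<m. yv b \<noteq> 0"
  show ?thesis
    unfolding vs.dependent_finite[OF finite_imageI[OF finite_lessThan]]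
  proof (intro notI, elim exE conjE)
    fix c
    assume nz: "\<exists>x\<in>yv ` {..<m}. c x \<noteq> 0" and "(\<Sum>x\<in>yv ` {..<m}. sc (c x) x) = 0"
    then have "(\<Sum>b<m. sc (c (yv b)) (yv b)) = 0"
      by (simp add: sum.reindex[OF inj_on_yv[OF m]])
    then have "\<forall>b<m. c (yv b) = 0"
      by (rule yv_sum_eq_0_imp[OF m])
    then show False
      using nz by auto
  qed
qed

lemma yv_in_span: "yv b \<in> vs.span (yv ` {..<n})"
proof (induction b rule: less_induct)
  case (less b)
  show ?case
  proof (cases "b < n")
    case True
    then show ?thesis by (simp add: vs.span_base)
  next
    case False
    obtain c where c: "Hact sc \<rho> (red n w (int w) 0 (b - n)) v = sc c (yv (b - n))"
      using Hact_red_v_eq_scale_yv by blast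
    have y_b: "red n w 0 0 b = (\<lambda>q. red n w 0 0 (b - n) q - red n w (int w) 0 (b - n) q :: 'k)"
      using False red_y_overflow[OF n_pos, of b w 0 0] by simp
    have "yv b = yv (b - n) - sc c (yv (b - n))"
      unfolding yv_def y_b Hact_diff_left[OF finite_fsupp_red[OF n_pos] finite_fsupp_red[OF n_pos]]
      using c by (simp add: yv_def)
    moreover have "yv (b - n) \<in> vs.span (yv ` {..<n})"
      using less n_pos False by simp
    ultimately show ?thesis
      by (simp add: vs.span_diff vs.span_scale)
  qed
qed

lemma span_yv_Hact_closed:
  assumes "\<And>b b'. b \<in> B \<Longrightarrow> yv (b' + b) \<in> vs.span (yv ` B)" "in_H n f" "u \<in> vs.span (yv ` B)"
  shows "Hact sc \<rho> f u \<in> vs.span (yv ` B)"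
proof (rule vs.module_hom_image_span_subset[OF Hact_hom assms(3)])
  show "Hact sc \<rho> f ` yv ` B \<subseteq> vs.span (yv ` B)"
  proof clarify
    fix b
    assume "b \<in> B"
    have "sc (f p) (\<rho> p (yv b)) \<in> vs.span (yv ` B)" if "p \<in> fsupp f" for p
    proof -
      have "valid_idx n p"
        using assms(2) that by (simp add: in_H_def)
      then obtain c where "\<rho> p (yv b) = sc c (yv (snd (snd p) + b))"
        using rho_yv by blast
      then show ?thesis
        using assms(1)[OF \<open>b \<in> B\<close>] by (simp add: vs.span_scale)
    qed
    then show "Hact sc \<rho> f (yv b) \<in> vs.span (yv ` B)"
      unfolding Hact_def by (simp add: vs.span_sum)
  qed
qed

lemma in_H_yH: "in_H n (yH n w :: 'k helt)"
  unfolding yH_def by (rule in_H_red[OF n_pos])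

text \<open>The Yetter-Drinfeld condition for h = y, using Delta^(2)(y) = y(x)g(x)g + 1(x)y(x)g + 1(x)1(x)y.\<close>

lemma delta_Hact_yH:
  assumes "2 \<le> n"
  shows "\<delta> d (Hact sc \<rho> (yH n w) x) = (\<Sum>c\<in>{c. \<delta> c x \<noteq> 0}.
      sc (hmul n w \<gamma> (hmul n w \<gamma> (yH n w) (hbasis c)) (antipode n w \<gamma> (gH n w)) d) (Hact sc \<rho> (gH n w) (\<delta> c x))
    + sc (hmul n w \<gamma> (hbasis c) (antipode n w \<gamma> (gH n w)) d) (Hact sc \<rho> (yH n w) (\<delta> c x))
    + sc (hmul n w \<gamma> (hbasis c) (antipode n w \<gamma> (yH n w)) d) (\<delta> c x))"
proof -
  let ?C = "{c. \<delta> c x \<noteq> 0}"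
  let ?X = "\<lambda>b1 c b3. hmul n w \<gamma> (hmul n w \<gamma> (hbasis b1) (hbasis c)) (antipode n w \<gamma> (hbasis b3)) d"
  have one: "hmul n w \<gamma> (hbasis (0, 0, 0)) (hbasis c) = hbasis c" if "c \<in> ?C" for c
  proof -
    have "valid_idx n c"
      using that delta_eq_0_if_invalid[of c x] by blast
    then show ?thesis
      using hmul_one_left[OF n_pos, of "hbasis c" w \<gamma>] by (simp add: hone_def in_H_def)
  qed
  have y: "yH n w = (hbasis (0, 0, 1) :: 'k helt)" and g: "gH n w = (hbasis (0, 1, 0) :: 'k helt)"
    using yH_eq_hbasis[OF assms] gH_eq_hbasis[OF assms] by simp_all
  have "\<delta> d (Hact sc \<rho> (yH n w) x)
      = (\<Sum>c\<in>?C. sc (?X (0, 0, 1) c (0, 1, 0)) (\<rho> (0, 1, 0) (\<delta> c x)))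
        + ((\<Sum>c\<in>?C. sc (?X (0, 0, 0) c (0, 1, 0)) (\<rho> (0, 0, 1) (\<delta> c x)))
        + (\<Sum>c\<in>?C. sc (?X (0, 0, 0) c (0, 0, 1)) (\<rho> (0, 0, 0) (\<delta> c x))))"
    unfolding delta_Hact[OF in_H_yH] fsupp_Delta3_yH[OF assms] unfolding Delta3_yH[OF assms]
    by (simp del: One_nat_def)
  also have "\<dots> = (\<Sum>c\<in>?C.
      sc (hmul n w \<gamma> (hmul n w \<gamma> (yH n w) (hbasis c)) (antipode n w \<gamma> (gH n w)) d) (Hact sc \<rho> (gH n w) (\<delta> c x))
    + sc (hmul n w \<gamma> (hbasis c) (antipode n w \<gamma> (gH n w)) d) (Hact sc \<rho> (yH n w) (\<delta> c x))
    + sc (hmul n w \<gamma> (hbasis c) (antipode n w \<gamma> (yH n w)) d) (\<delta> c x))"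
    unfolding y g Hact_hbasis sum.distrib
    using one Hact_hone Hact_hbasis[of "(0, 0, 0)", folded hone_def]
    by (simp del: One_nat_def add: add.assoc)
  finally show ?thesis .
qed

lemma delta_Hact_yH_expand:
  fixes k :: nat
  assumes "2 \<le> n" "\<And>c. \<delta> c x = (\<Sum>l\<le>k. sc (F l c) (u l))" "\<And>l. l \<le> k \<Longrightarrow> in_H n (F l)"
  shows "\<delta> d (Hact sc \<rho> (yH n w) x) = (\<Sum>l\<le>k.
      sc (hmul n w \<gamma> (hmul n w \<gamma> (yH n w) (F l)) (antipode n w \<gamma> (gH n w)) d) (Hact sc \<rho> (gH n w) (u l))
    + sc (hmul n w \<gamma> (F l) (antipode n w \<gamma> (gH n w)) d) (Hact sc \<rho> (yH n w) (u l))
    + sc (hmul n w \<gamma> (F l) (antipode n w \<gamma> (yH n w)) d) (u l))"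
proof -
  let ?Sy = "antipode n w \<gamma> (yH n w)" and ?Sg = "antipode n w \<gamma> (gH n w)"
  define C where "C = {c. \<delta> c x \<noteq> 0} \<union> (\<Union>l\<le>k. fsupp (F l))"
  have "finite (fsupp (F l))" if "l \<le> k" for l
    using assms(3)[OF that] by (simp add: in_H_def)
  then have fin_C: "finite C"
    by (simp add: C_def finite_delta_supp)
  have supp_F: "fsupp (F l) \<subseteq> C" if "l \<le> k" for l
    using that by (auto simp: C_def)
  have fin_Sg: "finite (fsupp ?Sg)"
    unfolding antipode_gH[OF n_pos root] by (rule finite_fsupp_red[OF n_pos])
  have fin_Sy: "finite (fsupp ?Sy)"
    unfolding antipode_yH_eq_Q by (rule finite_fsupp_smult[OF finite_fsupp_red[OF n_pos]])
  have term1: "(\<Sum>c\<in>C. sc (hmul n w \<gamma> (hmul n w \<gamma> (yH n w) (hbasis c)) ?Sg d)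
      (Hact sc \<rho> (gH n w) (\<Sum>l\<le>k. sc (F l c) (u l))))
    = (\<Sum>l\<le>k. sc (hmul n w \<gamma> (hmul n w \<gamma> (yH n w) (F l)) ?Sg d) (Hact sc \<rho> (gH n w) (u l)))"
    using hmul_hmul_hbasis_eq_sum[OF n_pos fin_C supp_F fin_Sg]
    by (intro vs.sum_scale_module_hom_swap[OF fin_C Hact_hom]) (simp add: yH_eq_hbasis[OF assms(1)])
  have term2: "(\<Sum>c\<in>C. sc (hmul n w \<gamma> (hbasis c) ?Sg d) (Hact sc \<rho> (yH n w) (\<Sum>l\<le>k. sc (F l c) (u l))))
    = (\<Sum>l\<le>k. sc (hmul n w \<gamma> (F l) ?Sg d) (Hact sc \<rho> (yH n w) (u l)))"
    using hmul_eq_sum_hbasis_left[OF fin_C supp_F fin_Sg]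
    by (intro vs.sum_scale_module_hom_swap[OF fin_C Hact_hom]) simp
  have term3: "(\<Sum>c\<in>C. sc (hmul n w \<gamma> (hbasis c) ?Sy d) (\<Sum>l\<le>k. sc (F l c) (u l)))
    = (\<Sum>l\<le>k. sc (hmul n w \<gamma> (F l) ?Sy d) (u l))"
    using vs.sum_scale_module_hom_swap[OF fin_C module_hom_iff_linear[THEN iffD2, OF vs.linear_ident],
        of k "\<lambda>l. hmul n w \<gamma> (F l) ?Sy d" F]
      hmul_eq_sum_hbasis_left[OF fin_C supp_F fin_Sy]
    by simp
  have "\<delta> d (Hact sc \<rho> (yH n w) x) = (\<Sum>c\<in>C.
      sc (hmul n w \<gamma> (hmul n w \<gamma> (yH n w) (hbasis c)) ?Sg d) (Hact sc \<rho> (gH n w) (\<delta> c x))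
    + sc (hmul n w \<gamma> (hbasis c) ?Sg d) (Hact sc \<rho> (yH n w) (\<delta> c x))
    + sc (hmul n w \<gamma> (hbasis c) ?Sy d) (\<delta> c x))"
    unfolding delta_Hact_yH[OF assms(1)]
    by (rule sum.mono_neutral_left) (use fin_C Hact_zero in \<open>auto simp: C_def\<close>)
  also have "\<dots> = (\<Sum>l\<le>k.
      sc (hmul n w \<gamma> (hmul n w \<gamma> (yH n w) (F l)) ?Sg d) (Hact sc \<rho> (gH n w) (u l))
    + sc (hmul n w \<gamma> (F l) ?Sg d) (Hact sc \<rho> (yH n w) (u l))
    + sc (hmul n w \<gamma> (F l) ?Sy d) (u l))"
    unfolding sum.distrib assms(2) term1 term2 term3 ..
  finally show ?thesis .
qed

theorem delta_yv:
  assumes "2 \<le> n"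
  shows "\<delta> d (yv k) = (\<Sum>l\<le>k. sc (cc n w \<gamma> \<beta> r i k l d) (yv l))"
proof (induction k arbitrary: d)
  case 0
  then show ?case
    by (simp add: yv_0 delta_v)
next
  case (Suc k)
  define A1 where "A1 l = hmul n w \<gamma> (hmul n w \<gamma> (yH n w) (cc n w \<gamma> \<beta> r i k l)) (antipode n w \<gamma> (gH n w)) d" for l
  define A2 where "A2 l = hmul n w \<gamma> (cc n w \<gamma> \<beta> r i k l) (antipode n w \<gamma> (gH n w)) d" for l
  define A3 where "A3 l = hmul n w \<gamma> (cc n w \<gamma> \<beta> r i k l) (antipode n w \<gamma> (yH n w)) d" for l
  have "\<delta> d (yv (Suc k)) = (\<Sum>l\<le>k. sc (A1 l) (Hact sc \<rho> (gH n w) (yv l))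
      + sc (A2 l) (Hact sc \<rho> (yH n w) (yv l)) + sc (A3 l) (yv l))"
    unfolding Hact_yH_yv[symmetric] A1_def A2_def A3_def
    by (rule delta_Hact_yH_expand[OF assms Suc.IH in_H_cc])
  also have "\<dots> = (\<Sum>l\<le>k. sc (A3 l + \<beta> * Q ^ l * A1 l) (yv l)) + (\<Sum>l\<le>k. sc (A2 l) (yv (Suc l)))"
    by (simp add: Hact_gH_yv Hact_yH_yv vs.scale_left_distrib sum.distrib algebra_simps)
  also have "\<dots> = (\<Sum>l\<le>Suc k. sc ((if l \<le> k then A3 l + \<beta> * Q ^ l * A1 l else 0)
      + (if l = 0 then 0 else A2 (l - 1))) (yv l))"
    by (rule vs.sum_atMost_shift_scale)
  also have "\<dots> = (\<Sum>l\<le>Suc k. sc (cc n w \<gamma> \<beta> r i (Suc k) l d) (yv l))"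
    by (intro sum.cong refl) (simp add: cc_Suc_apply A1_def A2_def A3_def del: cc.simps)
  finally show ?case .
qed

lemma YD_submodule_span_yv:
  assumes "\<And>b b'. b \<in> B \<Longrightarrow> yv (b' + b) \<in> vs.span (yv ` B)"
    and "\<And>b d. b \<in> B \<Longrightarrow> \<delta> d (yv b) \<in> vs.span (yv ` B)"
  shows "YD_submodule n w \<gamma> sc \<rho> \<delta> (vs.span (yv ` B))"
  unfolding YD_submodule_def
  using span_yv_Hact_closed[OF assms(1)] vs.module_hom_image_span_subset[OF delta_hom] assms(2)
  by blast

lemma delta_yv_in_span:
  assumes "2 \<le> n" "b \<in> B" "\<And>l. l \<le> b \<Longrightarrow> cc n w \<gamma> \<beta> r i b l = hzero \<or> l \<in> B"
  shows "\<delta> d (yv b) \<in> vs.span (yv ` B)"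
  unfolding delta_yv[OF assms(1)]
proof (rule vs.span_sum)
  fix l
  assume "l \<in> {..b}"
  then consider "cc n w \<gamma> \<beta> r i b l = hzero" | "l \<in> B"
    using assms(3) by auto
  then show "sc (cc n w \<gamma> \<beta> r i b l d) (yv l) \<in> vs.span (yv ` B)"
    by cases (simp_all add: hzero_def vs.span_zero vs.span_scale vs.span_base)
qed

end

section \<open>Simple Yetter-Drinfeld modules\<close>

locale simple_standard_YD = standard_YD +
  fixes p :: nat
  assumes simple: "YD_simple n w \<gamma> sc \<rho> \<delta>"
    and dim: "vs.dim UNIV = p + 1"
begin

lemma YD_submodule_trivial: "YD_submodule n w \<gamma> sc \<rho> \<delta> W \<Longrightarrow> W = {0} \<or> W = UNIV"
  using simple by (simp add: YD_simple_iff)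

lemma span_yv_eq_UNIV: "vs.span (yv ` {..<n}) = UNIV"
proof -
  have "\<delta> d (yv b) \<in> vs.span (yv ` {..<n})" if "b < n" for b d
  proof (cases "2 \<le> n")
    case True
    show ?thesis
      using that by (intro delta_yv_in_span[OF True]) auto
  next
    case False
    then have "b = 0"
      using that by linarith
    then have "yv b = v"
      using yv_0 by simp
    then show ?thesis
      using yv_in_span[of 0] by (simp add: yv_0 delta_v vs.span_scale)
  qed
  then have "YD_submodule n w \<gamma> sc \<rho> \<delta> (vs.span (yv ` {..<n}))"
    using yv_in_span by (intro YD_submodule_span_yv) auto
  moreover have "v \<in> vs.span (yv ` {..<n})"
    using yv_in_span[of 0] yv_0 by simp
  ultimately show ?thesis
    using YD_submodule_trivial v_neq_0 by blast
qed

lemma dim_eq: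
  assumes "m \<le> n" "\<forall>b<m. yv b \<noteq> 0" "\<forall>b\<in>{m..<n}. yv b = 0"
  shows "p + 1 = m"
proof -
  have "yv b \<in> vs.span (yv ` {..<m})" if "b < n" for b
  proof (cases "b < m")
    case True
    then show ?thesis by (simp add: vs.span_base)
  next
    case False
    then show ?thesis
      using assms(3) that by (simp add: vs.span_zero)
  qed
  then have "yv ` {..<n} \<subseteq> vs.span (yv ` {..<m})"
    by auto
  then have "UNIV \<subseteq> vs.span (yv ` {..<m})"
    using vs.span_minimal[OF _ vs.subspace_span] span_yv_eq_UNIV by blast
  then have "card (yv ` {..<m}) = vs.dim UNIV"
    by (rule vs.basis_card_eq_dim[OF subset_UNIV _ independent_yv[OF assms(1,2)]])
  then show ?thesis
    using card_image[OF inj_on_yv[OF assms(1,2)]] dim by simp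
qed

theorem dim_if_beta_pow_neq_1:
  assumes "\<beta> ^ n \<noteq> 1"
  shows "p = n - 1"
proof -
  have "yv b \<noteq> 0" if "b < n" for b
    using yv_add_eq_0[of b "n - b"] that yv_n assms v_neq_0 by auto
  then have "p + 1 = n"
    by (intro dim_eq) auto
  then show ?thesis
    by simp
qed

lemma obtain_first_zero_yv:
  assumes "\<beta> ^ n = 1"
  obtains m where "0 < m" "m \<le> n" "\<forall>b<m. yv b \<noteq> 0" "\<forall>b\<ge>m. yv b = 0"
proof -
  define m where "m = (LEAST b. yv b = 0)"
  have "yv n = 0"
    using yv_n assms by simp
  then have zero: "yv m = 0" and "m \<le> n"
    unfolding m_def by (auto intro: LeastI Least_le)
  moreover have nonzero: "\<forall>b<m. yv b \<noteq> 0"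
    unfolding m_def using not_less_Least by blast
  moreover have "0 < m"
    using zero yv_0 v_neq_0 by (cases m) auto
  moreover have "\<forall>b\<ge>m. yv b = 0"
    using yv_add_eq_0[OF zero] by (metis le_add_diff_inverse2)
  ultimately show ?thesis
    using that by blast
qed

lemma root_lt_first_zero:
  assumes "\<beta> = \<gamma> powi j" "0 < m" "m \<le> n" "\<forall>b<m. yv b \<noteq> 0" "yv m = 0"
  shows "nat ((i + j) mod int n) < m"
proof (cases "2 \<le> n")
  case False
  then have "n = 1"
    using n_pos by simp
  then show ?thesis
    using assms(2) by simp
next
  case True
  have "(\<Sum>l<m. sc (cc n w \<gamma> \<beta> r i m l d) (yv l)) = 0" for d
  proof -
    have "(\<Sum>l<m. sc (cc n w \<gamma> \<beta> r i m l d) (yv l)) = (\<Sum>l\<le>m. sc (cc n w \<gamma> \<beta> r i m l d) (yv l))"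
      using assms(5) by (simp add: lessThan_Suc_atMost[symmetric])
    also have "\<dots> = \<delta> d (yv m)"
      by (rule delta_yv[OF True, symmetric])
    finally show ?thesis
      using assms(5) module_hom.zero[OF delta_hom] by simp
  qed
  then have "cc n w \<gamma> \<beta> r i m 0 d = 0" for d
    using yv_sum_eq_0_imp[OF assms(3,4), of "\<lambda>l. cc n w \<gamma> \<beta> r i m l d"] assms(2) by blast
  then have "cc n w \<gamma> \<beta> r i m 0 = hzero"
    by (simp add: hzero_def fun_eq_iff)
  then obtain s where "s < m" "\<beta> * T * Q ^ s = 1"
    using cc_0_neq_hzero by blast
  moreover have "s = nat ((i + j) mod int n)"
    using beta_T_Q_pow_eq_1_iff[OF assms(1)] calculation assms(3) by simp
  ultimately show ?thesis
    by simp
qed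

lemma first_zero_le_Suc_root:
  assumes "\<beta> = \<gamma> powi j" "m \<le> n" "\<forall>b<m. yv b \<noteq> 0" "\<forall>b\<ge>m. yv b = 0"
  shows "m \<le> nat ((i + j) mod int n) + 1"
proof (rule ccontr)
  define P where "P = nat ((i + j) mod int n)"
  define W where "W = vs.span (yv ` {P + 1..<m})"
  assume "\<not> m \<le> nat ((i + j) mod int n) + 1"
  then have "P + 1 < m"
    by (simp add: P_def)
  then have n_ge_2: "2 \<le> n"
    using assms(2) by simp
  have root_P: "\<beta> * T * Q ^ P = 1"
    using beta_T_Q_pow_eq_1_iff[OF assms(1)] \<open>P + 1 < m\<close> assms(2) by (simp add: P_def)
  have "YD_submodule n w \<gamma> sc \<rho> \<delta> W"
    unfolding W_def
  proof (rule YD_submodule_span_yv)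
    show "yv (b' + b) \<in> vs.span (yv ` {P + 1..<m})" if "b \<in> {P + 1..<m}" for b b'
      using that assms(4) by (cases "b' + b < m") (simp_all add: vs.span_base vs.span_zero)
    show "\<delta> d (yv b) \<in> vs.span (yv ` {P + 1..<m})" if "b \<in> {P + 1..<m}" for b d
      using that cc_eq_hzero_if_root[OF _ _ root_P] by (intro delta_yv_in_span[OF n_ge_2]) auto
  qed
  then have "W = {0} \<or> W = UNIV"
    by (rule YD_submodule_trivial)
  moreover have "W \<noteq> {0}"
    using \<open>P + 1 < m\<close> assms(3) unfolding W_def by (metis atLeastLessThan_iff imageI le_refl vs.span_base singletonD)
  moreover have "v \<notin> W"
  proof
    assume "v \<in> W"
    have "yv ` {P + 1..<m} \<subseteq> yv ` {..<m} - {yv 0}"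
      using inj_on_yv[OF assms(2,3)] by (auto simp: inj_on_eq_iff)
    then have "yv 0 \<in> vs.span (yv ` {..<m} - {yv 0})"
      using \<open>v \<in> W\<close> vs.span_mono unfolding W_def yv_0 by blast
    then have "vs.dependent (yv ` {..<m})"
      unfolding vs.dependent_def using \<open>P + 1 < m\<close> by auto
    then show False
      using independent_yv[OF assms(2,3)] by simp
  qed
  ultimately show False
    by auto
qed

theorem dim_if_beta_pow_eq_1:
  assumes "\<beta> ^ n = 1" "\<beta> = \<gamma> powi j"
  shows "p = nat ((i + j) mod int n)"
proof -
  obtain m where m: "0 < m" "m \<le> n" "\<forall>b<m. yv b \<noteq> 0" "\<forall>b\<ge>m. yv b = 0"
    using obtain_first_zero_yv[OF assms(1)] by blast
  then have "p + 1 = m"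
    by (intro dim_eq) auto
  moreover have "nat ((i + j) mod int n) < m"
    using m by (intro root_lt_first_zero[OF assms(2)]) auto
  moreover have "m \<le> nat ((i + j) mod int n) + 1"
    using m by (intro first_zero_le_Suc_root[OF assms(2)]) auto
  ultimately show ?thesis
    by simp
qed

end

theorem proposition3p19:
  fixes n w :: nat and \<gamma> \<alpha> \<beta> :: "'k::field_char_0"
    and sc :: "'k \<Rightarrow> 'v::ab_group_add \<Rightarrow> 'v" and \<rho> \<delta> :: "idx \<Rightarrow> 'v \<Rightarrow> 'v"
    and v :: 'v and p :: nat and r i :: int
  assumes "alg_closed_field TYPE('k)"
    and "0 < n" and "0 < w" and "primitive_root n \<gamma>"
    and "YD_simple n w \<gamma> sc \<rho> \<delta>"
    and "vector_space.dim sc (UNIV :: 'v set) = p + 1"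
    and "standard_elem n w \<gamma> sc \<rho> \<delta> v \<alpha> \<beta> (xgH n w \<gamma> r i)"
  shows "(\<beta> ^ n \<noteq> 1 \<longrightarrow>
            p = n - 1 \<and>
            (\<forall>k\<le>n. cc n w \<gamma> \<beta> r i k 0 \<noteq> hzero) \<and>
            (\<forall>l. 1 \<le> l \<and> l \<le> n - 1 \<longrightarrow> cc n w \<gamma> \<beta> r i n l = hzero))
       \<and> (\<beta> ^ n = 1 \<longrightarrow>
            (\<forall>j::int. \<beta> = \<gamma> powi j \<longrightarrow>
               int p = int n - phi n (- i - j) \<and>
               (\<forall>k\<le>p. cc n w \<gamma> \<beta> r i k 0 \<noteq> hzero) \<and>
               (\<forall>l\<le>p. cc n w \<gamma> \<beta> r i (p + 1) l = hzero) \<and>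
               cc n w \<gamma> \<beta> r i (p + 1) (p + 1) \<noteq> hzero))"
proof -
  interpret simple_standard_YD n w \<gamma> \<beta> r i sc \<rho> \<delta> v \<alpha> p
    using assms(2-7) by unfold_locales (auto simp: primitive_root_def YD_simple_def)
  have "p = n - 1 \<and> (\<forall>k\<le>n. cc n w \<gamma> \<beta> r i k 0 \<noteq> hzero)
      \<and> (\<forall>l. 1 \<le> l \<and> l \<le> n - 1 \<longrightarrow> cc n w \<gamma> \<beta> r i n l = hzero)" if "\<beta> ^ n \<noteq> 1"
    using dim_if_beta_pow_neq_1[OF that] cc_vanishing_if_beta_pow_neq_1[OF that] n_pos by auto
  moreover have "int p = int n - phi n (- i - j) \<and> (\<forall>k\<le>p. cc n w \<gamma> \<beta> r i k 0 \<noteq> hzero)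
      \<and> (\<forall>l\<le>p. cc n w \<gamma> \<beta> r i (p + 1) l = hzero) \<and> cc n w \<gamma> \<beta> r i (p + 1) (p + 1) \<noteq> hzero"
    if "\<beta> ^ n = 1" "\<beta> = \<gamma> powi j" for j
  proof -
    have p: "p = nat ((i + j) mod int n)"
      using dim_if_beta_pow_eq_1[OF that] .
    then show ?thesis
      using int_minus_phi_uminus[OF n_pos, of "i + j"] n_pos cc_self_neq_hzero
        cc_vanishing_if_beta_eq_powi[OF that(2) p] by (simp del: cc.simps)
  qed
  ultimately show ?thesis
    by blast
qed

end
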